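(* The objects $\widetilde{U}_\Delta$ and $U_\Delta$, equipped with their involutions, are injectively fibrant objects of $\mathbf{Gpd}^{\mathbf{G}}$.
   Context: $\mathbf{Gpd}^{\mathbf{G}}$ is the category of groupoids equipped with an involution and involution-preserving functors; an object is injectively fibrant if its unique map to the terminal object has the right lifting property with respect to all morphisms whose underlying functor is injective on objects and an equivalence of groupoids. $\kappa$ is an inaccessible cardinal. $U_\Delta$: objects $(A_0,A_1,\varphi)$ with $A_0,A_1$ sets of cardinality $<\kappa$ and $\varphi:A_0\to A_1$ a bijection; morphisms $(A_0,A_1,\varphi)\to(B_0,B_1,\psi)$ are pairs of bijections $(\rho_0,\rho_1)$ with $\psi\rho_0=\rho_1\varphi$; involution $(A_0,A_1,\varphi)\mapsto(A_1,A_0,\varphi^{-1})$, $(\rho_0,\rho_1)\mapsto(\rho_1,\rho_0)$. $\widetilde{U}_\Delta$: objects $(A_0,A_1,a,\varphi)$ with $a\in A_0$; morphisms those $(\rho_0,\rho_1)$ with $\rho_0(a)=b$; involution $(A_0,A_1,a,\varphi)\mapsto(A_1,A_0,\varphi(a),\varphi^{-1})$, $(\rho_0,\rho_1)\mapsto(\rho_1,\rho_0)$. *)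

theory Defs
  imports Main "HOL-Library.FuncSet"
begin

unbundle cardinal_syntax

definition inaccessible :: "'k rel \<Rightarrow> bool" where
  "inaccessible \<kappa> \<longleftrightarrow>
     Card_order \<kappa> \<and> natLeq <o \<kappa> \<and> regularCard \<kappa> \<and>
     (\<forall>A. A \<subseteq> Field \<kappa> \<and> |A| <o \<kappa> \<longrightarrow> |Pow A| <o \<kappa>)"

text \<open>A (possibly large) groupoid: a set of objects, a set of arrows, domain, codomain,
  identities and composition ( cmp g f  is  g after f ).\<close>

record ('o, 'a) igpd =
  Ob :: "'o set"
  Ar :: "'a set"
  gdom :: "'a \<Rightarrow> 'o"
  gcod :: "'a \<Rightarrow> 'o"
  idn :: "'o \<Rightarrow> 'a"
  cmp :: "'a \<Rightarrow> 'a \<Rightarrow> 'a"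
  iob :: "'o \<Rightarrow> 'o"
  iar :: "'a \<Rightarrow> 'a"

definition groupoid :: "('o, 'a) igpd \<Rightarrow> bool" where
  "groupoid G \<longleftrightarrow>
     (\<forall>f\<in>Ar G. gdom G f \<in> Ob G \<and> gcod G f \<in> Ob G) \<and>
     (\<forall>x\<in>Ob G. idn G x \<in> Ar G \<and> gdom G (idn G x) = x \<and> gcod G (idn G x) = x) \<and>
     (\<forall>f\<in>Ar G. \<forall>g\<in>Ar G. gcod G f = gdom G g \<longrightarrow>
        cmp G g f \<in> Ar G \<and> gdom G (cmp G g f) = gdom G f \<and> gcod G (cmp G g f) = gcod G g) \<and>
     (\<forall>f\<in>Ar G. cmp G (idn G (gcod G f)) f = f \<and> cmp G f (idn G (gdom G f)) = f) \<and>
     (\<forall>f\<in>Ar G. \<forall>g\<in>Ar G. \<forall>h\<in>Ar G. gcod G f = gdom G g \<longrightarrow> gcod G g = gdom G h \<longrightarrow>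
        cmp G h (cmp G g f) = cmp G (cmp G h g) f) \<and>
     (\<forall>f\<in>Ar G. \<exists>g\<in>Ar G. gdom G g = gcod G f \<and> gcod G g = gdom G f \<and>
        cmp G g f = idn G (gdom G f) \<and> cmp G f g = idn G (gcod G f))"

definition functor_betw ::
  "('o, 'a) igpd \<Rightarrow> ('p, 'b) igpd \<Rightarrow> ('o \<Rightarrow> 'p) \<Rightarrow> ('a \<Rightarrow> 'b) \<Rightarrow> bool" where
  "functor_betw G H Fo Fa \<longleftrightarrow>
     Fo \<in> Ob G \<rightarrow> Ob H \<and> Fa \<in> Ar G \<rightarrow> Ar H \<and>
     (\<forall>f\<in>Ar G. gdom H (Fa f) = Fo (gdom G f) \<and> gcod H (Fa f) = Fo (gcod G f)) \<and>
     (\<forall>x\<in>Ob G. Fa (idn G x) = idn H (Fo x)) \<and>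
     (\<forall>f\<in>Ar G. \<forall>g\<in>Ar G. gcod G f = gdom G g \<longrightarrow> Fa (cmp G g f) = cmp H (Fa g) (Fa f))"

text \<open>An object of Gpd^G: a groupoid with a strict involution (a functor squaring to the identity).\<close>

definition igroupoid :: "('o, 'a) igpd \<Rightarrow> bool" where
  "igroupoid G \<longleftrightarrow> groupoid G \<and> functor_betw G G (iob G) (iar G) \<and>
     (\<forall>x\<in>Ob G. iob G (iob G x) = x) \<and> (\<forall>f\<in>Ar G. iar G (iar G f) = f)"

definition equivariant ::
  "('o, 'a) igpd \<Rightarrow> ('p, 'b) igpd \<Rightarrow> ('o \<Rightarrow> 'p) \<Rightarrow> ('a \<Rightarrow> 'b) \<Rightarrow> bool" where
  "equivariant G H Fo Fa \<longleftrightarrow> functor_betw G H Fo Fa \<and>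
     (\<forall>x\<in>Ob G. Fo (iob G x) = iob H (Fo x)) \<and> (\<forall>f\<in>Ar G. Fa (iar G f) = iar H (Fa f))"

text \<open>Natural transformation  eta : F => K  between functors G -> H (every component is an
  isomorphism since H is a groupoid, so this is a natural isomorphism).\<close>

definition nat_trans ::
  "('o, 'a) igpd \<Rightarrow> ('p, 'b) igpd \<Rightarrow> ('o \<Rightarrow> 'p) \<Rightarrow> ('a \<Rightarrow> 'b) \<Rightarrow> ('o \<Rightarrow> 'p) \<Rightarrow> ('a \<Rightarrow> 'b)
     \<Rightarrow> ('o \<Rightarrow> 'b) \<Rightarrow> bool" where
  "nat_trans G H Fo Fa Ko Ka \<eta> \<longleftrightarrow>
     (\<forall>x\<in>Ob G. \<eta> x \<in> Ar H \<and> gdom H (\<eta> x) = Fo x \<and> gcod H (\<eta> x) = Ko x) \<and>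
     (\<forall>f\<in>Ar G. cmp H (\<eta> (gcod G f)) (Fa f) = cmp H (Ka f) (\<eta> (gdom G f)))"

definition gpd_equivalence ::
  "('o, 'a) igpd \<Rightarrow> ('p, 'b) igpd \<Rightarrow> ('o \<Rightarrow> 'p) \<Rightarrow> ('a \<Rightarrow> 'b) \<Rightarrow> bool" where
  "gpd_equivalence G H Fo Fa \<longleftrightarrow> functor_betw G H Fo Fa \<and>
     (\<exists>(Ko :: 'p \<Rightarrow> 'o) (Ka :: 'b \<Rightarrow> 'a) \<eta> \<epsilon>. functor_betw H G Ko Ka \<and>
        nat_trans G G (\<lambda>x. x) (\<lambda>f. f) (Ko \<circ> Fo) (Ka \<circ> Fa) \<eta> \<and>
        nat_trans H H (Fo \<circ> Ko) (Fa \<circ> Ka) (\<lambda>y. y) (\<lambda>g. g) \<epsilon>)"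

text \<open>The lifting condition: the unique map  X -> 1  has the right lifting property with
  respect to the morphism  (io, ia) : A -> B  of Gpd^G, provided the latter is injective on
  objects and an equivalence of groupoids.  (Since  1  is terminal, a lifting problem is just
  a morphism  A -> X  that must be extended along  A -> B .)\<close>

definition lifts_against ::
  "('x, 'y) igpd \<Rightarrow> ('o, 'a) igpd \<Rightarrow> ('p, 'b) igpd \<Rightarrow> ('o \<Rightarrow> 'p) \<Rightarrow> ('a \<Rightarrow> 'b) \<Rightarrow> bool" where
  "lifts_against X A B io ia \<longleftrightarrow>
     (igroupoid A \<and> igroupoid B \<and> equivariant A B io ia \<and> inj_on io (Ob A) \<and>
      gpd_equivalence A B io ia) \<longrightarrow>
     (\<forall>fo fa. equivariant A X fo fa \<longrightarrow>
        (\<exists>go ga. equivariant B X go ga \<and>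
           (\<forall>x\<in>Ob A. go (io x) = fo x) \<and> (\<forall>f\<in>Ar A. ga (ia f) = fa f)))"

text \<open>Objects  (A0, A1, phi) ; functions are kept extensional (undefined off their domain),
  so that a bijection  A0 -> A1  has a unique representative.\<close>

type_synonym 'u dobj = "'u set \<times> 'u set \<times> ('u \<Rightarrow> 'u)"
type_synonym 'u darr = "'u dobj \<times> 'u dobj \<times> ('u \<Rightarrow> 'u) \<times> ('u \<Rightarrow> 'u)"

definition UD_obj :: "'k rel \<Rightarrow> 'u dobj set" where
  "UD_obj \<kappa> = {(A0, A1, \<phi>). |A0| <o \<kappa> \<and> |A1| <o \<kappa> \<and> bij_betw \<phi> A0 A1 \<and> \<phi> \<in> extensional A0}"

definition UD_arr :: "'k rel \<Rightarrow> 'u darr set" where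
  "UD_arr \<kappa> = {((A0, A1, \<phi>), (B0, B1, \<psi>), \<rho>0, \<rho>1).
     (A0, A1, \<phi>) \<in> UD_obj \<kappa> \<and> (B0, B1, \<psi>) \<in> UD_obj \<kappa> \<and>
     bij_betw \<rho>0 A0 B0 \<and> \<rho>0 \<in> extensional A0 \<and> bij_betw \<rho>1 A1 B1 \<and> \<rho>1 \<in> extensional A1 \<and>
     (\<forall>x\<in>A0. \<psi> (\<rho>0 x) = \<rho>1 (\<phi> x))}"

definition dinv :: "'u dobj \<Rightarrow> 'u dobj" where
  "dinv X = (case X of (A0, A1, \<phi>) \<Rightarrow> (A1, A0, restrict (inv_into A0 \<phi>) A1))"

definition U_Delta :: "'k rel \<Rightarrow> ('u dobj, 'u darr) igpd" where
  "U_Delta \<kappa> = \<lparr>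
     Ob = UD_obj \<kappa>,
     Ar = UD_arr \<kappa>,
     gdom = (\<lambda>(X, Y, \<rho>0, \<rho>1). X),
     gcod = (\<lambda>(X, Y, \<rho>0, \<rho>1). Y),
     idn = (\<lambda>(A0, A1, \<phi>). ((A0, A1, \<phi>), (A0, A1, \<phi>), restrict id A0, restrict id A1)),
     cmp = (\<lambda>(Y, Z, \<sigma>0, \<sigma>1) ((A0, A1, \<phi>), Y', \<rho>0, \<rho>1).
              ((A0, A1, \<phi>), Z, compose A0 \<sigma>0 \<rho>0, compose A1 \<sigma>1 \<rho>1)),
     iob = dinv,
     iar = (\<lambda>(X, Y, \<rho>0, \<rho>1). (dinv X, dinv Y, \<rho>1, \<rho>0)) \<rparr>"

type_synonym 'u pobj = "'u set \<times> 'u set \<times> 'u \<times> ('u \<Rightarrow> 'u)"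
type_synonym 'u parr = "'u pobj \<times> 'u pobj \<times> ('u \<Rightarrow> 'u) \<times> ('u \<Rightarrow> 'u)"

definition UtD_obj :: "'k rel \<Rightarrow> 'u pobj set" where
  "UtD_obj \<kappa> = {(A0, A1, a, \<phi>). (A0, A1, \<phi>) \<in> UD_obj \<kappa> \<and> a \<in> A0}"

definition UtD_arr :: "'k rel \<Rightarrow> 'u parr set" where
  "UtD_arr \<kappa> = {((A0, A1, a, \<phi>), (B0, B1, b, \<psi>), \<rho>0, \<rho>1).
     (A0, A1, a, \<phi>) \<in> UtD_obj \<kappa> \<and> (B0, B1, b, \<psi>) \<in> UtD_obj \<kappa> \<and>
     ((A0, A1, \<phi>), (B0, B1, \<psi>), \<rho>0, \<rho>1) \<in> UD_arr \<kappa> \<and> \<rho>0 a = b}"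

definition pinv :: "'u pobj \<Rightarrow> 'u pobj" where
  "pinv X = (case X of (A0, A1, a, \<phi>) \<Rightarrow> (A1, A0, \<phi> a, restrict (inv_into A0 \<phi>) A1))"

definition Ut_Delta :: "'k rel \<Rightarrow> ('u pobj, 'u parr) igpd" where
  "Ut_Delta \<kappa> = \<lparr>
     Ob = UtD_obj \<kappa>,
     Ar = UtD_arr \<kappa>,
     gdom = (\<lambda>(X, Y, \<rho>0, \<rho>1). X),
     gcod = (\<lambda>(X, Y, \<rho>0, \<rho>1). Y),
     idn = (\<lambda>(A0, A1, a, \<phi>). ((A0, A1, a, \<phi>), (A0, A1, a, \<phi>), restrict id A0, restrict id A1)),
     cmp = (\<lambda>(Y, Z, \<sigma>0, \<sigma>1) ((A0, A1, a, \<phi>), Y', \<rho>0, \<rho>1).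
              ((A0, A1, a, \<phi>), Z, compose A0 \<sigma>0 \<rho>0, compose A1 \<sigma>1 \<rho>1)),
     iob = pinv,
     iar = (\<lambda>(X, Y, \<rho>0, \<rho>1). (pinv X, pinv Y, \<rho>1, \<rho>0)) \<rparr>"

end

theory Submission
  imports Defs
begin

text \<open>Let \<open>i : A \<rightarrow> B\<close> be equivariant, injective on objects and an equivalence, and let
  \<open>f : A \<rightarrow> X\<close> be equivariant.  Every object \<open>b\<close> of \<open>B\<close> is isomorphic, via some \<open>\<theta>\<^sub>b\<close>, to an
  object \<open>i(a\<^sub>b)\<close>, with \<open>\<theta>\<^sub>b\<close> the identity on the image of \<open>i\<close>; since \<open>i\<close> is fully faithful,
  \<open>\<theta>\<^bsub>b\<^sup>*\<^esub> \<circ> (\<theta>\<^sub>b\<^sup>*)\<^sup>-\<^sup>1\<close> comes from an isomorphism of \<open>A\<close> and hence gives an isomorphism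
  \<open>\<beta>\<^sub>b : f(a\<^sub>b)\<^sup>* \<rightarrow> f(a\<^bsub>b\<^sup>*\<^esub>)\<close> in \<open>X\<close>.  The objects \<open>f(a\<^sub>b)\<close> are thus equivariant only up to
  isomorphism.  To make them strictly equivariant it suffices that \<open>X\<close> can replace an object \<open>x\<close>
  along an isomorphism \<open>\<beta> : x\<^sup>* \<rightarrow> x'\<close> by an isomorphic object \<open>y\<close>, in such a way that the
  replacement of \<open>x'\<close> along \<open>(\<beta>\<^sup>*)\<^sup>-\<^sup>1\<close> is \<open>y\<^sup>*\<close> and the replacement along an identity
  changes nothing.  In \<open>U\<^sub>\<Delta>\<close> such a replacement exists: \<open>(A\<^sub>0, A\<^sub>1, \<phi>)\<close> along
  \<open>(\<rho>\<^sub>0, \<rho>\<^sub>1)\<close> becomes \<open>(A\<^sub>0, B\<^sub>0, \<rho>\<^sub>0 \<circ> \<phi>)\<close>, i.e. the second component is taken from \<open>x'\<close>.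
  Arrows of \<open>B\<close> are transported to \<open>A\<close> along the \<open>\<theta>\<^sub>b\<close> and then conjugated into the
  replacements.  The size bound on the sets never enters.\<close>

section \<open>Calculus in a groupoid\<close>

definition hom :: "('o,'a) igpd \<Rightarrow> 'o \<Rightarrow> 'o \<Rightarrow> 'a set" where
  "hom G x y = {f \<in> Ar G. gdom G f = x \<and> gcod G f = y}"

definition ginv :: "('o,'a) igpd \<Rightarrow> 'a \<Rightarrow> 'a" where
  "ginv G f = (SOME g. g \<in> hom G (gcod G f) (gdom G f) \<and>
     cmp G g f = idn G (gdom G f) \<and> cmp G f g = idn G (gcod G f))"

lemma Ar_in_hom: "f \<in> Ar G \<Longrightarrow> f \<in> hom G (gdom G f) (gcod G f)"
  by (simp add: hom_def)

context
  fixes G :: "('o,'a) igpd"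
  assumes gpd: "groupoid G"
begin

lemma cmp_in_Ar: "f \<in> Ar G \<Longrightarrow> g \<in> Ar G \<Longrightarrow> gcod G f = gdom G g \<Longrightarrow> cmp G g f \<in> Ar G"
  using gpd unfolding groupoid_def by auto
lemma gdom_cmp: "f \<in> Ar G \<Longrightarrow> g \<in> Ar G \<Longrightarrow> gcod G f = gdom G g \<Longrightarrow> gdom G (cmp G g f) = gdom G f"
  using gpd unfolding groupoid_def by auto
lemma gcod_cmp: "f \<in> Ar G \<Longrightarrow> g \<in> Ar G \<Longrightarrow> gcod G f = gdom G g \<Longrightarrow> gcod G (cmp G g f) = gcod G g"
  using gpd unfolding groupoid_def by auto
lemma idn_in_Ar: "x \<in> Ob G \<Longrightarrow> idn G x \<in> Ar G"
  using gpd unfolding groupoid_def by auto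
lemma gdom_idn: "x \<in> Ob G \<Longrightarrow> gdom G (idn G x) = x"
  using gpd unfolding groupoid_def by auto
lemma gcod_idn: "x \<in> Ob G \<Longrightarrow> gcod G (idn G x) = x"
  using gpd unfolding groupoid_def by auto
lemma gdom_in_Ob: "f \<in> Ar G \<Longrightarrow> gdom G f \<in> Ob G"
  using gpd unfolding groupoid_def by auto
lemma gcod_in_Ob: "f \<in> Ar G \<Longrightarrow> gcod G f \<in> Ob G"
  using gpd unfolding groupoid_def by auto
lemma cmp_assoc: "f \<in> Ar G \<Longrightarrow> g \<in> Ar G \<Longrightarrow> h \<in> Ar G \<Longrightarrow> gcod G f = gdom G g \<Longrightarrow>
    gcod G g = gdom G h \<Longrightarrow> cmp G (cmp G h g) f = cmp G h (cmp G g f)"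
  using gpd unfolding groupoid_def by auto
lemma cmp_idn_left: "f \<in> Ar G \<Longrightarrow> gcod G f = y \<Longrightarrow> cmp G (idn G y) f = f"
  using gpd unfolding groupoid_def by auto
lemma cmp_idn_right: "f \<in> Ar G \<Longrightarrow> gdom G f = y \<Longrightarrow> cmp G f (idn G y) = f"
  using gpd unfolding groupoid_def by auto

lemma ginv_props:
  assumes "f \<in> Ar G"
  shows "ginv G f \<in> Ar G \<and> gdom G (ginv G f) = gcod G f \<and> gcod G (ginv G f) = gdom G f \<and>
     cmp G (ginv G f) f = idn G (gdom G f) \<and> cmp G f (ginv G f) = idn G (gcod G f)"
proof -
  have "\<exists>g. g \<in> hom G (gcod G f) (gdom G f) \<and>
      cmp G g f = idn G (gdom G f) \<and> cmp G f g = idn G (gcod G f)"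
    using gpd assms unfolding groupoid_def hom_def by auto
  from someI_ex[OF this] show ?thesis unfolding ginv_def by (auto simp: hom_def)
qed

lemma ginv_in_Ar: "f \<in> Ar G \<Longrightarrow> ginv G f \<in> Ar G" using ginv_props by blast
lemma gdom_ginv: "f \<in> Ar G \<Longrightarrow> gdom G (ginv G f) = gcod G f" using ginv_props by blast
lemma gcod_ginv: "f \<in> Ar G \<Longrightarrow> gcod G (ginv G f) = gdom G f" using ginv_props by blast
lemma cmp_ginv_left: "f \<in> Ar G \<Longrightarrow> cmp G (ginv G f) f = idn G (gdom G f)" using ginv_props by blast
lemma cmp_ginv_right: "f \<in> Ar G \<Longrightarrow> cmp G f (ginv G f) = idn G (gcod G f)" using ginv_props by blast

lemma ginv_cmp_cancel:
  assumes "f \<in> Ar G" "g \<in> Ar G" "gcod G g = gdom G f"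
  shows "cmp G (ginv G f) (cmp G f g) = g"
proof -
  have "cmp G (cmp G (ginv G f) f) g = cmp G (ginv G f) (cmp G f g)"
    by (rule cmp_assoc) (simp_all add: assms ginv_in_Ar gdom_ginv)
  then show ?thesis using assms by (simp add: cmp_ginv_left cmp_idn_left)
qed

lemma cmp_ginv_cancel:
  assumes "f \<in> Ar G" "g \<in> Ar G" "gcod G g = gcod G f"
  shows "cmp G f (cmp G (ginv G f) g) = g"
proof -
  have "cmp G (cmp G f (ginv G f)) g = cmp G f (cmp G (ginv G f) g)"
    by (rule cmp_assoc) (simp_all add: assms ginv_in_Ar gdom_ginv gcod_ginv)
  then show ?thesis using assms by (simp add: cmp_ginv_right cmp_idn_left)
qed

lemma ginv_unique:
  assumes "f \<in> Ar G" "g \<in> Ar G" "gdom G g = gcod G f" "gcod G g = gdom G f"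
    and "cmp G g f = idn G (gdom G f)"
  shows "ginv G f = g"
proof -
  have "g = cmp G g (cmp G f (ginv G f))" using assms by (simp add: cmp_ginv_right cmp_idn_right)
  also have "\<dots> = cmp G (cmp G g f) (ginv G f)"
    by (rule cmp_assoc[symmetric]) (simp_all add: assms ginv_in_Ar gcod_ginv)
  also have "\<dots> = ginv G f" using assms by (simp add: cmp_idn_left ginv_in_Ar gcod_ginv)
  finally show ?thesis by simp
qed

lemma ginv_ginv: "f \<in> Ar G \<Longrightarrow> ginv G (ginv G f) = f"
  by (rule ginv_unique) (simp_all add: ginv_in_Ar gdom_ginv gcod_ginv cmp_ginv_right)

lemma ginv_idn: "x \<in> Ob G \<Longrightarrow> ginv G (idn G x) = idn G x"
  by (rule ginv_unique) (simp_all add: idn_in_Ar gdom_idn gcod_idn cmp_idn_left)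

lemma ginv_cmp:
  assumes "f \<in> Ar G" "g \<in> Ar G" "gcod G f = gdom G g"
  shows "ginv G (cmp G g f) = cmp G (ginv G f) (ginv G g)"
proof (rule ginv_unique)
  have "cmp G (cmp G (ginv G f) (ginv G g)) (cmp G g f) =
      cmp G (ginv G f) (cmp G (ginv G g) (cmp G g f))"
    by (rule cmp_assoc) (simp_all add: assms ginv_in_Ar gdom_ginv gcod_ginv cmp_in_Ar gdom_cmp gcod_cmp)
  also have "\<dots> = idn G (gdom G (cmp G g f))"
    using assms by (simp add: ginv_cmp_cancel cmp_ginv_left gdom_cmp)
  finally show "cmp G (cmp G (ginv G f) (ginv G g)) (cmp G g f) = idn G (gdom G (cmp G g f))" .
qed (simp_all add: assms ginv_in_Ar gdom_ginv gcod_ginv cmp_in_Ar gdom_cmp gcod_cmp)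

lemmas groupoid_simps = cmp_in_Ar gdom_cmp gcod_cmp ginv_in_Ar gdom_ginv gcod_ginv
  idn_in_Ar gdom_idn gcod_idn gdom_in_Ob gcod_in_Ob cmp_assoc cmp_idn_left cmp_idn_right
  cmp_ginv_left cmp_ginv_right ginv_cmp_cancel cmp_ginv_cancel ginv_cmp ginv_ginv ginv_idn hom_def

lemma hom_Ob: "f \<in> hom G x y \<Longrightarrow> x \<in> Ob G" "f \<in> hom G x y \<Longrightarrow> y \<in> Ob G"
  using gpd by (auto simp: groupoid_def hom_def)
lemma idn_hom: "x \<in> Ob G \<Longrightarrow> idn G x \<in> hom G x x"
  by (simp add: groupoid_simps)
lemma cmp_hom: "f \<in> hom G x y \<Longrightarrow> g \<in> hom G y z \<Longrightarrow> cmp G g f \<in> hom G x z"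
  by (simp add: groupoid_simps)
lemma ginv_hom: "f \<in> hom G x y \<Longrightarrow> ginv G f \<in> hom G y x"
  by (simp add: groupoid_simps)

lemma cmp_cancel_left:
  assumes "h \<in> hom G y z" "f \<in> hom G x y" "f' \<in> hom G x y" "cmp G h f = cmp G h f'"
  shows "f = f'"
proof -
  have "cmp G (ginv G h) (cmp G h f) = cmp G (ginv G h) (cmp G h f')" using assms by simp
  then show ?thesis using assms(1-3) by (simp add: groupoid_simps)
qed

lemma cmp_cancel_right:
  assumes "h \<in> hom G x y" "f \<in> hom G y z" "f' \<in> hom G y z" "cmp G f h = cmp G f' h"
  shows "f = f'"
proof -
  have "cmp G (cmp G f h) (ginv G h) = cmp G (cmp G f' h) (ginv G h)" using assms by simp
  then show ?thesis using assms(1-3) by (simp add: groupoid_simps)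
qed

end

lemma functor_hom: "functor_betw G H Fo Fa \<Longrightarrow> f \<in> hom G x y \<Longrightarrow> Fa f \<in> hom H (Fo x) (Fo y)"
  unfolding functor_betw_def hom_def by auto
lemma functor_Ob: "functor_betw G H Fo Fa \<Longrightarrow> x \<in> Ob G \<Longrightarrow> Fo x \<in> Ob H"
  unfolding functor_betw_def by auto
lemma functor_idn: "functor_betw G H Fo Fa \<Longrightarrow> x \<in> Ob G \<Longrightarrow> Fa (idn G x) = idn H (Fo x)"
  unfolding functor_betw_def by auto
lemma functor_cmp: "functor_betw G H Fo Fa \<Longrightarrow> f \<in> hom G x y \<Longrightarrow> g \<in> hom G y z \<Longrightarrow>
    Fa (cmp G g f) = cmp H (Fa g) (Fa f)"
  unfolding functor_betw_def hom_def by auto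

lemma functor_ginv:
  assumes G: "groupoid G" and H: "groupoid H" and F: "functor_betw G H Fo Fa"
    and f: "f \<in> hom G x y"
  shows "Fa (ginv G f) = ginv H (Fa f)"
proof -
  have i: "ginv G f \<in> hom G y x" using ginv_hom[OF G f] .
  have "Fa (cmp G (ginv G f) f) = idn H (Fo x)"
    using f G F hom_Ob[OF G f] by (simp add: groupoid_simps[OF G] functor_idn)
  then have "cmp H (Fa (ginv G f)) (Fa f) = idn H (Fo x)" using functor_cmp[OF F f i] by simp
  then show ?thesis
    using functor_hom[OF F f] functor_hom[OF F i] unfolding hom_def
    by (intro ginv_unique[OF H, symmetric]) auto
qed

lemma igroupoid_groupoid: "igroupoid G \<Longrightarrow> groupoid G"
  by (simp add: igroupoid_def)
lemma igroupoid_functor: "igroupoid G \<Longrightarrow> functor_betw G G (iob G) (iar G)"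
  by (simp add: igroupoid_def)
lemma iob_iob: "igroupoid G \<Longrightarrow> x \<in> Ob G \<Longrightarrow> iob G (iob G x) = x"
  by (simp add: igroupoid_def)
lemma iar_iar: "igroupoid G \<Longrightarrow> f \<in> hom G x y \<Longrightarrow> iar G (iar G f) = f"
  by (simp add: igroupoid_def hom_def)
lemma equivariant_functor: "equivariant G H Fo Fa \<Longrightarrow> functor_betw G H Fo Fa"
  by (simp add: equivariant_def)
lemma equivariant_iob: "equivariant G H Fo Fa \<Longrightarrow> x \<in> Ob G \<Longrightarrow> Fo (iob G x) = iob H (Fo x)"
  by (simp add: equivariant_def)
lemma equivariant_iar: "equivariant G H Fo Fa \<Longrightarrow> f \<in> hom G x y \<Longrightarrow> Fa (iar G f) = iar H (Fa f)"
  by (simp add: equivariant_def hom_def)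

definition gconj :: "('o,'a) igpd \<Rightarrow> 'a \<Rightarrow> 'a \<Rightarrow> 'a \<Rightarrow> 'a" where
  "gconj G s h t = cmp G s (cmp G h (ginv G t))"

context
  fixes G :: "('o,'a) igpd"
  assumes gpd: "groupoid G"
begin

lemma gconj_hom:
  "s \<in> hom G y2 z2 \<Longrightarrow> h \<in> hom G y1 y2 \<Longrightarrow> t \<in> hom G y1 z1 \<Longrightarrow> gconj G s h t \<in> hom G z1 z2"
  unfolding gconj_def by (simp add: groupoid_simps[OF gpd])

lemma gconj_idn_idn:
  assumes "h \<in> hom G x y"
  shows "gconj G (idn G y) h (idn G x) = h"
  unfolding gconj_def using assms hom_Ob[OF gpd assms] by (simp add: groupoid_simps[OF gpd])

lemma gconj_idn_self: "s \<in> hom G y z \<Longrightarrow> gconj G s (idn G y) s = idn G z"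
  unfolding gconj_def by (simp add: groupoid_simps[OF gpd])

lemma cmp_gconj:
  assumes "s1 \<in> hom G y1 z1" "s2 \<in> hom G y2 z2" "s3 \<in> hom G y3 z3"
    and "k \<in> hom G y1 y2" "h \<in> hom G y2 y3"
  shows "cmp G (gconj G s3 h s2) (gconj G s2 k s1) = gconj G s3 (cmp G h k) s1"
  using assms unfolding gconj_def by (simp add: groupoid_simps[OF gpd])

lemma gconj_rebase:
  assumes "s3 \<in> hom G y3 z3" "s2 \<in> hom G y3 w3" "h \<in> hom G y1 y3"
    and "t2 \<in> hom G y1 w1" "s1 \<in> hom G y1 z1"
  shows "gconj G (gconj G s3 (idn G y3) s2) (gconj G s2 h t2) (gconj G s1 (idn G y1) t2) =
    gconj G s3 h s1"
  using assms hom_Ob[OF gpd assms(1)] hom_Ob[OF gpd assms(5)]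
  unfolding gconj_def by (simp add: groupoid_simps[OF gpd])

lemma gconj_ginv_cmp:
  assumes "b \<in> hom G u1 v1" "b' \<in> hom G u2 v2" "c \<in> hom G w1 u1" "c' \<in> hom G w2 u2"
    and "h \<in> hom G u1 u2"
  shows "gconj G (ginv G (cmp G b' c')) (gconj G b' h b) (ginv G (cmp G b c)) =
    gconj G (ginv G c') h (ginv G c)"
  using assms unfolding gconj_def by (simp add: groupoid_simps[OF gpd])

end

lemma functor_gconj:
  assumes G: "groupoid G" and H: "groupoid H" and F: "functor_betw G H Fo Fa"
    and "s \<in> hom G y2 z2" "h \<in> hom G y1 y2" "t \<in> hom G y1 z1"
  shows "Fa (gconj G s h t) = gconj H (Fa s) (Fa h) (Fa t)"
proof -
  have i: "ginv G t \<in> hom G z1 y1" using ginv_hom[OF G assms(6)] .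
  have c: "cmp G h (ginv G t) \<in> hom G z1 y2" using cmp_hom[OF G i assms(5)] .
  show ?thesis unfolding gconj_def
    using functor_cmp[OF F c assms(4)] functor_cmp[OF F i assms(5)] functor_ginv[OF G H F assms(6)]
    by simp
qed

section \<open>Lifting along equivariant equivalences\<close>

definition involutive_replacement ::
  "('x, 'y) igpd \<Rightarrow> ('x \<Rightarrow> 'x \<Rightarrow> 'y \<Rightarrow> 'x) \<Rightarrow> ('x \<Rightarrow> 'x \<Rightarrow> 'y \<Rightarrow> 'y) \<Rightarrow> bool" where
  "involutive_replacement X rep rep_iso \<longleftrightarrow>
     (\<forall>x\<in>Ob X. \<forall>x'\<in>Ob X. \<forall>\<beta>\<in>hom X (iob X x) x'.
        rep x x' \<beta> \<in> Ob X \<and> rep_iso x x' \<beta> \<in> hom X (rep x x' \<beta>) x \<and>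
        rep x' x (ginv X (iar X \<beta>)) = iob X (rep x x' \<beta>) \<and>
        rep_iso x' x (ginv X (iar X \<beta>)) = cmp X \<beta> (iar X (rep_iso x x' \<beta>))) \<and>
     (\<forall>x\<in>Ob X. rep x (iob X x) (idn X (iob X x)) = x \<and>
        rep_iso x (iob X x) (idn X (iob X x)) = idn X x)"

definition ar_preimage :: "('o,'a) igpd \<Rightarrow> ('a \<Rightarrow> 'b) \<Rightarrow> 'o \<Rightarrow> 'o \<Rightarrow> 'b \<Rightarrow> 'a" where
  "ar_preimage A ia a a' g = (THE f. f \<in> hom A a a' \<and> ia f = g)"

locale groupoid_equivalence =
  fixes A :: "('o,'a) igpd" and B :: "('p,'b) igpd"
    and io :: "'o \<Rightarrow> 'p" and ia :: "'a \<Rightarrow> 'b"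
    and Ko :: "'p \<Rightarrow> 'o" and Ka :: "'b \<Rightarrow> 'a" and eta :: "'o \<Rightarrow> 'a" and eps :: "'p \<Rightarrow> 'b"
  assumes gpd_A: "groupoid A" and gpd_B: "groupoid B"
    and io_functor: "functor_betw A B io ia" and Ko_functor: "functor_betw B A Ko Ka"
    and unit: "nat_trans A A (\<lambda>x. x) (\<lambda>f. f) (Ko \<circ> io) (Ka \<circ> ia) eta"
    and counit: "nat_trans B B (io \<circ> Ko) (ia \<circ> Ka) (\<lambda>y. y) (\<lambda>g. g) eps"
begin

lemma eta_hom: "x \<in> Ob A \<Longrightarrow> eta x \<in> hom A x (Ko (io x))"
  using unit unfolding nat_trans_def hom_def by auto
lemma eta_natural: "f \<in> hom A x y \<Longrightarrow> cmp A (eta y) f = cmp A (Ka (ia f)) (eta x)"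
  using unit unfolding nat_trans_def hom_def by auto
lemma eps_hom: "y \<in> Ob B \<Longrightarrow> eps y \<in> hom B (io (Ko y)) y"
  using counit unfolding nat_trans_def hom_def by auto
lemma eps_natural: "g \<in> hom B y y' \<Longrightarrow> cmp B (eps y') (ia (Ka g)) = cmp B g (eps y)"
  using counit unfolding nat_trans_def hom_def by auto

lemma io_faithful:
  assumes "f \<in> hom A x y" "f' \<in> hom A x y" "ia f = ia f'"
  shows "f = f'"
proof -
  have "cmp A (eta y) f = cmp A (eta y) f'"
    using eta_natural[OF assms(1)] eta_natural[OF assms(2)] assms(3) by simp
  then show ?thesis
    using cmp_cancel_left[OF gpd_A eta_hom[OF hom_Ob(2)[OF gpd_A assms(1)]] assms(1,2)] by simp
qed

lemma Ko_faithful: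
  assumes "g \<in> hom B x y" "g' \<in> hom B x y" "Ka g = Ka g'"
  shows "g = g'"
proof -
  have "cmp B g (eps x) = cmp B g' (eps x)"
    using eps_natural[OF assms(1)] eps_natural[OF assms(2)] assms(3) by simp
  then show ?thesis
    using cmp_cancel_right[OF gpd_B eps_hom[OF hom_Ob(1)[OF gpd_B assms(1)]] assms(1,2)] by simp
qed

lemma io_full:
  assumes a: "a \<in> Ob A" and a': "a' \<in> Ob A" and g: "g \<in> hom B (io a) (io a')"
  shows "\<exists>f. f \<in> hom A a a' \<and> ia f = g"
proof -
  define f where "f = cmp A (ginv A (eta a')) (cmp A (Ka g) (eta a))"
  have Kg: "Ka g \<in> hom A (Ko (io a)) (Ko (io a'))" using functor_hom[OF Ko_functor g] .
  note e = eta_hom[OF a] eta_hom[OF a']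
  have f: "f \<in> hom A a a'" unfolding f_def using Kg e by (simp add: groupoid_simps[OF gpd_A])
  have "cmp A (Ka (ia f)) (eta a) = cmp A (eta a') f" using eta_natural[OF f] by simp
  also have "\<dots> = cmp A (Ka g) (eta a)"
    unfolding f_def using Kg e by (simp add: groupoid_simps[OF gpd_A])
  finally have "Ka (ia f) = Ka g"
    using cmp_cancel_right[OF gpd_A e(1) functor_hom[OF Ko_functor functor_hom[OF io_functor f]] Kg]
    by simp
  then have "ia f = g" using Ko_faithful[OF functor_hom[OF io_functor f] g] by simp
  then show ?thesis using f by blast
qed

lemma ar_preimage:
  assumes "a \<in> Ob A" "a' \<in> Ob A" "g \<in> hom B (io a) (io a')"
  shows "ar_preimage A ia a a' g \<in> hom A a a' \<and> ia (ar_preimage A ia a a' g) = g"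
proof -
  have "\<exists>!f. f \<in> hom A a a' \<and> ia f = g" using io_full[OF assms] io_faithful by blast
  from theI'[OF this] show ?thesis unfolding ar_preimage_def .
qed

lemma ar_preimage_eq: "f \<in> hom A a a' \<Longrightarrow> ia f = g \<Longrightarrow> ar_preimage A ia a a' g = f"
  unfolding ar_preimage_def using io_faithful by blast

end

locale equivariant_lifting = groupoid_equivalence A B io ia Ko Ka eta eps
  for A :: "('o,'a) igpd" and B :: "('p,'b) igpd"
    and io :: "'o \<Rightarrow> 'p" and ia :: "'a \<Rightarrow> 'b"
    and Ko :: "'p \<Rightarrow> 'o" and Ka :: "'b \<Rightarrow> 'a" and eta :: "'o \<Rightarrow> 'a" and eps :: "'p \<Rightarrow> 'b" +
  fixes X :: "('x,'y) igpd" and fo :: "'o \<Rightarrow> 'x" and fa :: "'a \<Rightarrow> 'y"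
    and rep :: "'x \<Rightarrow> 'x \<Rightarrow> 'y \<Rightarrow> 'x" and rep_iso :: "'x \<Rightarrow> 'x \<Rightarrow> 'y \<Rightarrow> 'y"
  assumes iX: "igroupoid X" and iA: "igroupoid A" and iB: "igroupoid B"
    and eqAB: "equivariant A B io ia" and inj: "inj_on io (Ob A)"
    and eqAX: "equivariant A X fo fa"
    and replacement: "involutive_replacement X rep rep_iso"
begin

lemma gpd_X: "groupoid X" using iX igroupoid_groupoid by blast
lemma fo_functor: "functor_betw A X fo fa" using eqAX equivariant_functor by blast
lemma inv_X: "functor_betw X X (iob X) (iar X)" using iX igroupoid_functor by blast
lemma inv_A: "functor_betw A A (iob A) (iar A)" using iA igroupoid_functor by blast
lemma inv_B: "functor_betw B B (iob B) (iar B)" using iB igroupoid_functor by blast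

lemma iobB_Ob: "b \<in> Ob B \<Longrightarrow> iob B b \<in> Ob B" using functor_Ob[OF inv_B] .
lemma iobA_Ob: "a \<in> Ob A \<Longrightarrow> iob A a \<in> Ob A" using functor_Ob[OF inv_A] .
lemma iobB_iobB: "b \<in> Ob B \<Longrightarrow> iob B (iob B b) = b" using iob_iob[OF iB] .
lemma iobA_iobA: "a \<in> Ob A \<Longrightarrow> iob A (iob A a) = a" using iob_iob[OF iA] .
lemma io_Ob: "a \<in> Ob A \<Longrightarrow> io a \<in> Ob B" using functor_Ob[OF io_functor] .
lemma fo_Ob: "a \<in> Ob A \<Longrightarrow> fo a \<in> Ob X" using functor_Ob[OF fo_functor] .
lemma io_iob: "a \<in> Ob A \<Longrightarrow> io (iob A a) = iob B (io a)" using equivariant_iob[OF eqAB] .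
lemma fo_iob: "a \<in> Ob A \<Longrightarrow> fo (iob A a) = iob X (fo a)" using equivariant_iob[OF eqAX] .

lemma rep_hom:
  "x \<in> Ob X \<Longrightarrow> x' \<in> Ob X \<Longrightarrow> \<beta> \<in> hom X (iob X x) x' \<Longrightarrow>
    rep x x' \<beta> \<in> Ob X \<and> rep_iso x x' \<beta> \<in> hom X (rep x x' \<beta>) x"
  using replacement unfolding involutive_replacement_def by blast
lemma rep_conjugate:
  "x \<in> Ob X \<Longrightarrow> x' \<in> Ob X \<Longrightarrow> \<beta> \<in> hom X (iob X x) x' \<Longrightarrow>
    rep x' x (ginv X (iar X \<beta>)) = iob X (rep x x' \<beta>) \<and>
    rep_iso x' x (ginv X (iar X \<beta>)) = cmp X \<beta> (iar X (rep_iso x x' \<beta>))"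
  using replacement unfolding involutive_replacement_def by blast
lemma rep_idn:
  "x \<in> Ob X \<Longrightarrow> rep x (iob X x) (idn X (iob X x)) = x \<and> rep_iso x (iob X x) (idn X (iob X x)) = idn X x"
  using replacement unfolding involutive_replacement_def by blast

text \<open>\<open>base b\<close>, \<open>base_iso b\<close> and \<open>image_twist b\<close> are the \<open>a\<^sub>b\<close>, \<open>\<theta>\<^sub>b\<close> and \<open>\<beta>\<^sub>b\<close> of the
  proof idea; \<open>lift_ob b\<close> is the replacement of \<open>f(a\<^sub>b)\<close> along \<open>\<beta>\<^sub>b\<close>.\<close>

definition base :: "'p \<Rightarrow> 'o" where
  "base b = (if b \<in> io ` Ob A then the_inv_into (Ob A) io b else Ko b)"
definition base_iso :: "'p \<Rightarrow> 'b" where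
  "base_iso b = (if b \<in> io ` Ob A then idn B b else ginv B (eps b))"
definition twist_B :: "'p \<Rightarrow> 'b" where
  "twist_B b = gconj B (base_iso (iob B b)) (idn B (iob B b)) (iar B (base_iso b))"
definition twist :: "'p \<Rightarrow> 'a" where
  "twist b = ar_preimage A ia (iob A (base b)) (base (iob B b)) (twist_B b)"
definition image_ob :: "'p \<Rightarrow> 'x" where
  "image_ob b = fo (base b)"
definition image_twist :: "'p \<Rightarrow> 'y" where
  "image_twist b = fa (twist b)"
definition lift_ob :: "'p \<Rightarrow> 'x" where
  "lift_ob b = rep (image_ob b) (image_ob (iob B b)) (image_twist b)"
definition lift_iso :: "'p \<Rightarrow> 'y" where
  "lift_iso b = rep_iso (image_ob b) (image_ob (iob B b)) (image_twist b)"
definition transport :: "'p \<Rightarrow> 'p \<Rightarrow> 'b \<Rightarrow> 'a" where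
  "transport b b' g = ar_preimage A ia (base b) (base b') (gconj B (base_iso b') g (base_iso b))"
definition lift_ar :: "'b \<Rightarrow> 'y" where
  "lift_ar g = gconj X (ginv X (lift_iso (gcod B g))) (fa (transport (gdom B g) (gcod B g) g))
     (ginv X (lift_iso (gdom B g)))"

lemma base_Ob: "b \<in> Ob B \<Longrightarrow> base b \<in> Ob A"
  unfolding base_def using functor_Ob[OF Ko_functor] the_inv_into_into[OF inj] by (auto simp: image_iff)
lemma base_io: "a \<in> Ob A \<Longrightarrow> base (io a) = a"
  unfolding base_def using the_inv_into_f_f[OF inj] by auto
lemma base_iso_io: "a \<in> Ob A \<Longrightarrow> base_iso (io a) = idn B (io a)"
  unfolding base_iso_def by auto

lemma base_iso_hom:
  assumes b: "b \<in> Ob B"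
  shows "base_iso b \<in> hom B b (io (base b))"
proof (cases "b \<in> io ` Ob A")
  case True
  then obtain a where "a \<in> Ob A" "b = io a" by auto
  then show ?thesis using idn_hom[OF gpd_B b] by (simp add: base_iso_io base_io)
next
  case False
  then show ?thesis unfolding base_iso_def base_def using ginv_hom[OF gpd_B eps_hom[OF b]] by simp
qed

lemma iar_base_iso_hom:
  "b \<in> Ob B \<Longrightarrow> iar B (base_iso b) \<in> hom B (iob B b) (io (iob A (base b)))"
  using functor_hom[OF inv_B base_iso_hom] io_iob[OF base_Ob] by simp

lemma twist_B_hom:
  assumes b: "b \<in> Ob B"
  shows "twist_B b \<in> hom B (io (iob A (base b))) (io (base (iob B b)))"
  unfolding twist_B_def using iar_base_iso_hom[OF b]
    gconj_hom[OF gpd_B base_iso_hom[OF iobB_Ob[OF b]] idn_hom[OF gpd_B iobB_Ob[OF b]]] by blast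

lemma twist_hom: "b \<in> Ob B \<Longrightarrow> twist b \<in> hom A (iob A (base b)) (base (iob B b))"
  and ia_twist: "b \<in> Ob B \<Longrightarrow> ia (twist b) = twist_B b"
  unfolding twist_def using ar_preimage[OF iobA_Ob[OF base_Ob] base_Ob[OF iobB_Ob] twist_B_hom] by blast+

lemma iar_twist_hom: "b \<in> Ob B \<Longrightarrow> iar A (twist b) \<in> hom A (base b) (iob A (base (iob B b)))"
  using functor_hom[OF inv_A twist_hom] iobA_iobA[OF base_Ob] by simp

text \<open>The twists of \<open>b\<close> and of its conjugate are mutually inverse up to the involution,
  because their images in \<open>B\<close> are built from the same two isomorphisms \<open>\<theta>\<^sub>b\<close>, \<open>\<theta>\<^bsub>b\<^sup>*\<^esub>\<close>.\<close>

lemma twist_iob: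
  assumes b: "b \<in> Ob B"
  shows "twist (iob B b) = ginv A (iar A (twist b))"
proof -
  note tw = iar_twist_hom[OF b] and tw' = twist_hom[OF iobB_Ob[OF b], unfolded iobB_iobB[OF b]]
  note th = base_iso_hom[OF b] and th' = base_iso_hom[OF iobB_Ob[OF b]]
  have c: "cmp A (twist (iob B b)) (iar A (twist b)) \<in> hom A (base b) (base b)"
    using cmp_hom[OF gpd_A tw tw'] .
  have th'': "iar B (base_iso (iob B b)) \<in> hom B b (iob B (io (base (iob B b))))"
    using functor_hom[OF inv_B th'] iobB_iobB[OF b] by simp
  have tw_B: "twist_B (iob B b) = gconj B (base_iso b) (idn B b) (iar B (base_iso (iob B b)))"
    unfolding twist_B_def using iobB_iobB[OF b] by simp
  have iar_tw_B: "iar B (twist_B b) = gconj B (iar B (base_iso (iob B b))) (idn B b) (base_iso b)"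
    unfolding twist_B_def
    using functor_gconj[OF gpd_B gpd_B inv_B th' idn_hom[OF gpd_B iobB_Ob[OF b]] functor_hom[OF inv_B th]]
      functor_idn[OF inv_B iobB_Ob[OF b]] iobB_iobB[OF b] iar_iar[OF iB th] by simp
  have "ia (cmp A (twist (iob B b)) (iar A (twist b))) = cmp B (twist_B (iob B b)) (iar B (twist_B b))"
    using functor_cmp[OF io_functor tw tw'] ia_twist[OF iobB_Ob[OF b]]
      equivariant_iar[OF eqAB twist_hom[OF b]] ia_twist[OF b] by simp
  also have "\<dots> = gconj B (base_iso b) (cmp B (idn B b) (idn B b)) (base_iso b)"
    unfolding tw_B iar_tw_B by (rule cmp_gconj[OF gpd_B th th'' th]) (simp_all add: idn_hom[OF gpd_B b])
  also have "\<dots> = ia (idn A (base b))"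
    using gconj_idn_self[OF gpd_B th] functor_idn[OF io_functor base_Ob[OF b]]
      cmp_idn_left[OF gpd_B idn_in_Ar[OF gpd_B b] gcod_idn[OF gpd_B b]] by simp
  finally have "cmp A (twist (iob B b)) (iar A (twist b)) = idn A (base b)"
    using io_faithful[OF c idn_hom[OF gpd_A base_Ob[OF b]]] by blast
  then show ?thesis using tw tw' by (intro ginv_unique[OF gpd_A, symmetric]) (auto simp: hom_def)
qed

lemma image_ob_Ob: "b \<in> Ob B \<Longrightarrow> image_ob b \<in> Ob X"
  unfolding image_ob_def using fo_Ob base_Ob by blast

lemma image_twist_hom: "b \<in> Ob B \<Longrightarrow> image_twist b \<in> hom X (iob X (image_ob b)) (image_ob (iob B b))"
  unfolding image_twist_def image_ob_def using functor_hom[OF fo_functor twist_hom] fo_iob[OF base_Ob]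
  by simp

lemma image_twist_iob: "b \<in> Ob B \<Longrightarrow> image_twist (iob B b) = ginv X (iar X (image_twist b))"
  unfolding image_twist_def
  using twist_iob functor_ginv[OF gpd_A gpd_X fo_functor iar_twist_hom] equivariant_iar[OF eqAX twist_hom]
  by simp

lemma lift_ob_Ob: "b \<in> Ob B \<Longrightarrow> lift_ob b \<in> Ob X"
  and lift_iso_hom: "b \<in> Ob B \<Longrightarrow> lift_iso b \<in> hom X (lift_ob b) (image_ob b)"
  unfolding lift_ob_def lift_iso_def using rep_hom[OF image_ob_Ob image_ob_Ob[OF iobB_Ob] image_twist_hom]
  by blast+

lemma lift_ob_iob: "b \<in> Ob B \<Longrightarrow> lift_ob (iob B b) = iob X (lift_ob b)"
  and lift_iso_iob: "b \<in> Ob B \<Longrightarrow> lift_iso (iob B b) = cmp X (image_twist b) (iar X (lift_iso b))"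
  unfolding lift_ob_def lift_iso_def
  using rep_conjugate[OF image_ob_Ob image_ob_Ob[OF iobB_Ob] image_twist_hom] image_twist_iob iobB_iobB
  by simp_all

lemma lift_ob_io: "a \<in> Ob A \<Longrightarrow> lift_ob (io a) = fo a"
  and lift_iso_io: "a \<in> Ob A \<Longrightarrow> lift_iso (io a) = idn X (fo a)"
proof -
  assume a: "a \<in> Ob A"
  have ia: "iob B (io a) = io (iob A a)" using io_iob[OF a] by simp
  have "twist_B (io a) = idn B (io (iob A a))"
    unfolding twist_B_def ia base_iso_io[OF a] base_iso_io[OF iobA_Ob[OF a]]
    using functor_idn[OF inv_B io_Ob[OF a]] ia
      gconj_idn_idn[OF gpd_B idn_hom[OF gpd_B io_Ob[OF iobA_Ob[OF a]]]] by simp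
  then have "twist (io a) = idn A (iob A a)"
    unfolding twist_def ia base_io[OF a] base_io[OF iobA_Ob[OF a]]
    using functor_idn[OF io_functor iobA_Ob[OF a]]
    by (intro ar_preimage_eq idn_hom[OF gpd_A iobA_Ob[OF a]]) simp
  then have "image_twist (io a) = idn X (iob X (fo a))"
    unfolding image_twist_def using functor_idn[OF fo_functor iobA_Ob[OF a]] fo_iob[OF a] by simp
  then have "lift_ob (io a) = fo a \<and> lift_iso (io a) = idn X (fo a)"
    unfolding lift_ob_def lift_iso_def image_ob_def ia base_io[OF a] base_io[OF iobA_Ob[OF a]] fo_iob[OF a]
    using rep_idn[OF fo_Ob[OF a]] by simp
  then show "lift_ob (io a) = fo a" "lift_iso (io a) = idn X (fo a)" by simp_all
qed

lemma transport_hom: "g \<in> hom B b b' \<Longrightarrow> transport b b' g \<in> hom A (base b) (base b')"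
  and ia_transport: "g \<in> hom B b b' \<Longrightarrow> ia (transport b b' g) = gconj B (base_iso b') g (base_iso b)"
  unfolding transport_def
  using ar_preimage[OF base_Ob base_Ob gconj_hom[OF gpd_B base_iso_hom _ base_iso_hom]]
    hom_Ob[OF gpd_B] by blast+

lemma transport_idn: "b \<in> Ob B \<Longrightarrow> transport b b (idn B b) = idn A (base b)"
  unfolding transport_def using gconj_idn_self[OF gpd_B base_iso_hom] functor_idn[OF io_functor base_Ob]
  by (intro ar_preimage_eq idn_hom[OF gpd_A base_Ob]) simp_all

lemma transport_cmp:
  assumes f: "f \<in> hom B b b'" and g: "g \<in> hom B b' b''"
  shows "transport b b'' (cmp B g f) = cmp A (transport b' b'' g) (transport b b' f)"
  unfolding transport_def[of b b'' "cmp B g f"]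
proof (rule ar_preimage_eq)
  have b: "b \<in> Ob B" "b' \<in> Ob B" "b'' \<in> Ob B" using hom_Ob[OF gpd_B f] hom_Ob[OF gpd_B g] by auto
  show "cmp A (transport b' b'' g) (transport b b' f) \<in> hom A (base b) (base b'')"
    using cmp_hom[OF gpd_A transport_hom[OF f] transport_hom[OF g]] .
  show "ia (cmp A (transport b' b'' g) (transport b b' f)) = gconj B (base_iso b'') (cmp B g f) (base_iso b)"
    using functor_cmp[OF io_functor transport_hom[OF f] transport_hom[OF g]] ia_transport[OF f]
      ia_transport[OF g] cmp_gconj[OF gpd_B base_iso_hom[OF b(1)] base_iso_hom[OF b(2)] base_iso_hom[OF b(3)] f g]
    by simp
qed

lemma transport_iar:
  assumes g: "g \<in> hom B b b'"
  shows "transport (iob B b) (iob B b') (iar B g) = gconj A (twist b') (iar A (transport b b' g)) (twist b)"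
  unfolding transport_def[of "iob B b" "iob B b'" "iar B g"]
proof (rule ar_preimage_eq)
  have b: "b \<in> Ob B" "b' \<in> Ob B" using hom_Ob[OF gpd_B g] by auto
  have tr: "iar A (transport b b' g) \<in> hom A (iob A (base b)) (iob A (base b'))"
    using functor_hom[OF inv_A transport_hom[OF g]] .
  note th = base_iso_hom[OF b(1)] base_iso_hom[OF b(2)]
  note th' = base_iso_hom[OF iobB_Ob[OF b(1)]] base_iso_hom[OF iobB_Ob[OF b(2)]]
  show "gconj A (twist b') (iar A (transport b b' g)) (twist b) \<in> hom A (base (iob B b)) (base (iob B b'))"
    using gconj_hom[OF gpd_A twist_hom[OF b(2)] tr twist_hom[OF b(1)]] .
  have "ia (gconj A (twist b') (iar A (transport b b' g)) (twist b)) =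
      gconj B (twist_B b') (iar B (gconj B (base_iso b') g (base_iso b))) (twist_B b)"
    using functor_gconj[OF gpd_A gpd_B io_functor twist_hom[OF b(2)] tr twist_hom[OF b(1)]]
      ia_twist[OF b(1)] ia_twist[OF b(2)] equivariant_iar[OF eqAB transport_hom[OF g]] ia_transport[OF g]
    by simp
  also have "\<dots> = gconj B (twist_B b')
      (gconj B (iar B (base_iso b')) (iar B g) (iar B (base_iso b))) (twist_B b)"
    using functor_gconj[OF gpd_B gpd_B inv_B th(2) g th(1)] by simp
  also have "\<dots> = gconj B (base_iso (iob B b')) (iar B g) (base_iso (iob B b))"
    unfolding twist_B_def
    by (rule gconj_rebase[OF gpd_B th'(2) iar_base_iso_hom[OF b(2)] functor_hom[OF inv_B g]
          iar_base_iso_hom[OF b(1)] th'(1)])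
  finally show "ia (gconj A (twist b') (iar A (transport b b' g)) (twist b)) =
      gconj B (base_iso (iob B b')) (iar B g) (base_iso (iob B b))" .
qed

lemma transport_ia: "f \<in> hom A a a' \<Longrightarrow> transport (io a) (io a') (ia f) = f"
  unfolding transport_def
  using base_io base_iso_io gconj_idn_idn[OF gpd_B functor_hom[OF io_functor]] ar_preimage_eq hom_Ob[OF gpd_A]
  by metis

lemma lift_ar_hom:
  assumes g: "g \<in> hom B b b'"
  shows "lift_ar g \<in> hom X (lift_ob b) (lift_ob b')"
proof -
  have b: "b \<in> Ob B" "b' \<in> Ob B" and gd: "gdom B g = b" "gcod B g = b'"
    using hom_Ob[OF gpd_B g] g by (auto simp: hom_def)
  show ?thesis unfolding lift_ar_def gd
    using gconj_hom[OF gpd_X ginv_hom[OF gpd_X lift_iso_hom[OF b(2)]]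
        functor_hom[OF fo_functor transport_hom[OF g], folded image_ob_def]
        ginv_hom[OF gpd_X lift_iso_hom[OF b(1)]]] .
qed

lemma lift_ar_idn: "b \<in> Ob B \<Longrightarrow> lift_ar (idn B b) = idn X (lift_ob b)"
  unfolding lift_ar_def
  using transport_idn functor_idn[OF fo_functor base_Ob] gconj_idn_self[OF gpd_X ginv_hom[OF gpd_X lift_iso_hom]]
    gdom_idn[OF gpd_B] gcod_idn[OF gpd_B]
  by (simp add: image_ob_def)

lemma lift_ar_cmp:
  assumes f: "f \<in> hom B b b'" and g: "g \<in> hom B b' b''"
  shows "lift_ar (cmp B g f) = cmp X (lift_ar g) (lift_ar f)"
proof -
  have b: "b \<in> Ob B" "b' \<in> Ob B" "b'' \<in> Ob B" using hom_Ob[OF gpd_B f] hom_Ob[OF gpd_B g] by auto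
  have gd: "gdom B (cmp B g f) = b" "gcod B (cmp B g f) = b''" "gdom B f = b" "gcod B f = b'"
      "gdom B g = b'" "gcod B g = b''"
    using cmp_hom[OF gpd_B f g] f g by (auto simp: hom_def)
  note fr = functor_hom[OF fo_functor transport_hom[OF f], folded image_ob_def]
    functor_hom[OF fo_functor transport_hom[OF g], folded image_ob_def]
  show ?thesis unfolding lift_ar_def gd transport_cmp[OF f g] functor_cmp[OF fo_functor transport_hom[OF f] transport_hom[OF g]]
    using cmp_gconj[OF gpd_X ginv_hom[OF gpd_X lift_iso_hom[OF b(1)]] ginv_hom[OF gpd_X lift_iso_hom[OF b(2)]]
        ginv_hom[OF gpd_X lift_iso_hom[OF b(3)]] fr] by simp
qed

lemma lift_ar_iar:
  assumes g: "g \<in> hom B b b'"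
  shows "lift_ar (iar B g) = iar X (lift_ar g)"
proof -
  have b: "b \<in> Ob B" "b' \<in> Ob B" using hom_Ob[OF gpd_B g] by auto
  have gd: "gdom B (iar B g) = iob B b" "gcod B (iar B g) = iob B b'" "gdom B g = b" "gcod B g = b'"
    using g functor_hom[OF inv_B g] by (auto simp: hom_def)
  have iso: "lift_iso b \<in> hom X (lift_ob b) (image_ob b)" "lift_iso b' \<in> hom X (lift_ob b') (image_ob b')"
    using lift_iso_hom b by auto
  have fr: "fa (transport b b' g) \<in> hom X (image_ob b) (image_ob b')"
    using functor_hom[OF fo_functor transport_hom[OF g]] unfolding image_ob_def .
  have "fa (transport (iob B b) (iob B b') (iar B g)) =
      gconj X (image_twist b') (iar X (fa (transport b b' g))) (image_twist b)"
    unfolding transport_iar[OF g] image_twist_def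
    using functor_gconj[OF gpd_A gpd_X fo_functor twist_hom[OF b(2)] functor_hom[OF inv_A transport_hom[OF g]]
        twist_hom[OF b(1)]] equivariant_iar[OF eqAX transport_hom[OF g]] by simp
  then have "lift_ar (iar B g) = gconj X (ginv X (cmp X (image_twist b') (iar X (lift_iso b'))))
      (gconj X (image_twist b') (iar X (fa (transport b b' g))) (image_twist b))
      (ginv X (cmp X (image_twist b) (iar X (lift_iso b))))"
    unfolding lift_ar_def gd using lift_iso_iob b by simp
  also have "\<dots> = gconj X (ginv X (iar X (lift_iso b'))) (iar X (fa (transport b b' g)))
      (ginv X (iar X (lift_iso b)))"
    by (rule gconj_ginv_cmp[OF gpd_X image_twist_hom[OF b(1)] image_twist_hom[OF b(2)]
          functor_hom[OF inv_X iso(1)] functor_hom[OF inv_X iso(2)] functor_hom[OF inv_X fr]])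
  also have "\<dots> = iar X (lift_ar g)"
    unfolding lift_ar_def gd
    using functor_gconj[OF gpd_X gpd_X inv_X ginv_hom[OF gpd_X iso(2)] fr ginv_hom[OF gpd_X iso(1)]]
      functor_ginv[OF gpd_X gpd_X inv_X iso(1)] functor_ginv[OF gpd_X gpd_X inv_X iso(2)]
    by simp
  finally show ?thesis .
qed

lemma lift_ar_ia:
  assumes f: "f \<in> hom A a a'"
  shows "lift_ar (ia f) = fa f"
proof -
  have a: "a \<in> Ob A" "a' \<in> Ob A" using hom_Ob[OF gpd_A f] by auto
  have "gdom B (ia f) = io a" "gcod B (ia f) = io a'"
    using functor_hom[OF io_functor f] by (auto simp: hom_def)
  then show ?thesis
    unfolding lift_ar_def
    using transport_ia[OF f] lift_iso_io[OF a(1)] lift_iso_io[OF a(2)] ginv_idn[OF gpd_X fo_Ob[OF a(1)]]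
      ginv_idn[OF gpd_X fo_Ob[OF a(2)]] gconj_idn_idn[OF gpd_X functor_hom[OF fo_functor f]] by simp
qed

lemma lift_extends:
  "equivariant B X lift_ob lift_ar \<and> (\<forall>a\<in>Ob A. lift_ob (io a) = fo a) \<and>
    (\<forall>f\<in>Ar A. lift_ar (ia f) = fa f)"
proof -
  have "functor_betw B X lift_ob lift_ar"
    unfolding functor_betw_def
  proof (intro conjI ballI impI)
    show "lift_ob \<in> Ob B \<rightarrow> Ob X" using lift_ob_Ob by blast
    show "lift_ar \<in> Ar B \<rightarrow> Ar X" using lift_ar_hom[OF Ar_in_hom] by (auto simp: hom_def)
    fix f assume "f \<in> Ar B"
    then show "gdom X (lift_ar f) = lift_ob (gdom B f)" "gcod X (lift_ar f) = lift_ob (gcod B f)"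
      using lift_ar_hom[OF Ar_in_hom] by (auto simp: hom_def)
  next
    fix b assume "b \<in> Ob B"
    then show "lift_ar (idn B b) = idn X (lift_ob b)" using lift_ar_idn by blast
  next
    fix f g assume "f \<in> Ar B" "g \<in> Ar B" "gcod B f = gdom B g"
    then show "lift_ar (cmp B g f) = cmp X (lift_ar g) (lift_ar f)"
      using lift_ar_cmp[OF Ar_in_hom[of f B], of g] Ar_in_hom[of g B] by simp
  qed
  then show ?thesis
    unfolding equivariant_def using lift_ob_iob lift_ar_iar[OF Ar_in_hom] lift_ob_io lift_ar_ia[OF Ar_in_hom]
    by blast
qed

end

theorem lifts_against_if_involutive_replacement:
  assumes "igroupoid X" and "involutive_replacement X rep rep_iso"
  shows "lifts_against X A B io ia"
  unfolding lifts_against_def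
proof (intro impI allI)
  fix fo fa
  assume H: "igroupoid A \<and> igroupoid B \<and> equivariant A B io ia \<and> inj_on io (Ob A) \<and>
      gpd_equivalence A B io ia"
    and f: "equivariant A X fo fa"
  then obtain Ko Ka eta eps where "functor_betw B A Ko Ka"
    and "nat_trans A A (\<lambda>x. x) (\<lambda>f. f) (Ko \<circ> io) (Ka \<circ> ia) eta"
    and "nat_trans B B (io \<circ> Ko) (ia \<circ> Ka) (\<lambda>y. y) (\<lambda>g. g) eps"
    unfolding gpd_equivalence_def by blast
  then interpret equivariant_lifting A B io ia Ko Ka eta eps X fo fa rep rep_iso
    using H f assms by unfold_locales (auto simp: igroupoid_def gpd_equivalence_def)
  show "\<exists>go ga. equivariant B X go ga \<and> (\<forall>x\<in>Ob A. go (io x) = fo x) \<and> (\<forall>f\<in>Ar A. ga (ia f) = fa f)"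
    using lift_extends by blast
qed

section \<open>The universe \<open>U\<^sub>\<Delta>\<close>\<close>

lemma dobj_cases:
  fixes x :: "'u dobj"
  obtains A0 A1 \<phi> where "x = (A0,A1,\<phi>)"
  by (cases x) auto

lemma darr_cases:
  fixes f :: "'u darr"
  obtains A0 A1 \<phi> B0 B1 \<psi> r0 r1 where "f = ((A0,A1,\<phi>),(B0,B1,\<psi>),r0,r1)"
  by (cases f) auto

lemma UD_obj_iff[simp]:
  "(A0,A1,\<phi>) \<in> UD_obj \<kappa> \<longleftrightarrow> |A0| <o \<kappa> \<and> |A1| <o \<kappa> \<and> bij_betw \<phi> A0 A1 \<and> \<phi> \<in> extensional A0"
  by (simp add: UD_obj_def)

lemma UD_arr_iff[simp]:
  "((A0,A1,\<phi>),(B0,B1,\<psi>),r0,r1) \<in> UD_arr \<kappa> \<longleftrightarrow>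
    (A0,A1,\<phi>) \<in> UD_obj \<kappa> \<and> (B0,B1,\<psi>) \<in> UD_obj \<kappa> \<and> bij_betw r0 A0 B0 \<and> r0 \<in> extensional A0 \<and>
    bij_betw r1 A1 B1 \<and> r1 \<in> extensional A1 \<and> (\<forall>x\<in>A0. \<psi> (r0 x) = r1 (\<phi> x))"
  by (simp add: UD_arr_def)

lemma dinv_simp[simp]: "dinv (A0,A1,\<phi>) = (A1,A0,restrict (inv_into A0 \<phi>) A1)"
  by (simp add: dinv_def)

lemma U_Delta_simps[simp]:
  "Ob (U_Delta \<kappa>) = UD_obj \<kappa>" "Ar (U_Delta \<kappa>) = UD_arr \<kappa>"
  "gdom (U_Delta \<kappa>) (X,Y,r0,r1) = X" "gcod (U_Delta \<kappa>) (X,Y,r0,r1) = Y"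
  "idn (U_Delta \<kappa>) (A0,A1,\<phi>) = ((A0,A1,\<phi>),(A0,A1,\<phi>),restrict id A0, restrict id A1)"
  "cmp (U_Delta \<kappa>) (Y,Z,s0,s1) ((A0,A1,\<phi>),Y',r0,r1) =
    ((A0,A1,\<phi>),Z,compose A0 s0 r0, compose A1 s1 r1)"
  "iob (U_Delta \<kappa>) = dinv" "iar (U_Delta \<kappa>) (X,Y,r0,r1) = (dinv X, dinv Y, r1, r0)"
  by (simp_all add: U_Delta_def)

lemma restrict_id_eq: "restrict id A = (\<lambda>x\<in>A. x)"
  by (simp add: id_def)

lemma compose_restrict_ident: "compose A g (\<lambda>x\<in>A. x) = restrict g A"
  by (auto simp: compose_def)

text \<open>Applied to the transposed square, this also inverts the vertical sides.\<close>

lemma inv_into_commuting_square: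
  assumes "bij_betw \<phi> A0 A1" "bij_betw r0 A0 B0" "inj_on r1 A1"
    and "\<forall>x\<in>A0. \<psi> (r0 x) = r1 (\<phi> x)" "y \<in> B0"
  shows "\<phi> (inv_into A0 r0 y) = inv_into A1 r1 (\<psi> y)"
proof -
  have x: "inv_into A0 r0 y \<in> A0" "r0 (inv_into A0 r0 y) = y"
    using assms(2,5) by (auto simp: bij_betw_def inv_into_into f_inv_into_f)
  then have "\<psi> y = r1 (\<phi> (inv_into A0 r0 y))" using assms(4) by force
  then show ?thesis using inv_into_f_f[OF assms(3)] bij_betw_apply[OF assms(1) x(1)] by simp
qed

lemma UD_arr_idn:
  "(A0,A1,\<phi>) \<in> UD_obj \<kappa> \<Longrightarrow> ((A0,A1,\<phi>),(A0,A1,\<phi>),restrict id A0, restrict id A1) \<in> UD_arr \<kappa>"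
  by (auto simp: restrict_id_eq bij_betw_apply bij_betw_id[unfolded id_def])

lemma UD_arr_compose:
  "((A0,A1,\<phi>),(B0,B1,\<psi>),r0,r1) \<in> UD_arr \<kappa> \<Longrightarrow> ((B0,B1,\<psi>),(C0,C1,\<chi>),s0,s1) \<in> UD_arr \<kappa> \<Longrightarrow>
    ((A0,A1,\<phi>),(C0,C1,\<chi>),compose A0 s0 r0, compose A1 s1 r1) \<in> UD_arr \<kappa>"
  by (auto simp: bij_betw_compose compose_eq bij_betw_apply)

lemma UD_arr_inverse:
  assumes "((A0,A1,\<phi>),(B0,B1,\<psi>),r0,r1) \<in> UD_arr \<kappa>"
  shows "((B0,B1,\<psi>),(A0,A1,\<phi>),restrict (inv_into A0 r0) B0, restrict (inv_into A1 r1) B1) \<in> UD_arr \<kappa>"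
  using assms inv_into_commuting_square[of \<phi> A0 A1 r0 B0 r1 \<psi>]
  by (auto simp: bij_betw_inv_into bij_betw_apply bij_betw_imp_inj_on)

lemma UD_arr_swap:
  assumes "((A0,A1,\<phi>),(B0,B1,\<psi>),r0,r1) \<in> UD_arr \<kappa>"
  shows "(dinv (A0,A1,\<phi>), dinv (B0,B1,\<psi>), r1, r0) \<in> UD_arr \<kappa>"
  using assms inv_into_commuting_square[of r0 A0 B0 \<phi> A1 \<psi> r1]
  by (auto simp: bij_betw_inv_into bij_betw_apply bij_betw_imp_inj_on)

lemma UD_obj_dinv: "(A0,A1,\<phi>) \<in> UD_obj \<kappa> \<Longrightarrow> dinv (A0,A1,\<phi>) \<in> UD_obj \<kappa>"
  by (auto simp: bij_betw_inv_into)

lemma dinv_dinv: "(A0,A1,\<phi>) \<in> UD_obj \<kappa> \<Longrightarrow> dinv (dinv (A0,A1,\<phi>)) = (A0,A1,\<phi>)"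
  by (auto intro!: extensionalityI[where A=A0] inv_into_f_eq
      simp: bij_betw_def inv_into_into inj_on_inv_into)

lemma groupoid_U_Delta: "groupoid (U_Delta \<kappa>)"
  unfolding groupoid_def
proof (intro conjI ballI impI)
  let ?U = "U_Delta \<kappa>"
  fix f assume f: "f \<in> Ar ?U"
  obtain A0 A1 \<phi> B0 B1 \<psi> r0 r1 where fe: "f = ((A0,A1,\<phi>),(B0,B1,\<psi>),r0,r1)" by (rule darr_cases)
  show "gdom ?U f \<in> Ob ?U" "gcod ?U f \<in> Ob ?U"
    using f unfolding fe by (simp_all del: UD_obj_iff)
  show "cmp ?U (idn ?U (gcod ?U f)) f = f"
    using f unfolding fe by (simp add: restrict_id_eq Id_compose bij_betw_imp_funcset)
  show "cmp ?U f (idn ?U (gdom ?U f)) = f"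
    using f unfolding fe by (simp add: restrict_id_eq compose_restrict_ident extensional_restrict)
  let ?g = "((B0,B1,\<psi>),(A0,A1,\<phi>),restrict (inv_into A0 r0) B0, restrict (inv_into A1 r1) B1)"
  have "?g \<in> Ar ?U" using UD_arr_inverse f unfolding fe by (simp del: UD_arr_iff)
  moreover have "cmp ?U ?g f = idn ?U (gdom ?U f)"
    using f unfolding fe by (simp add: restrict_id_eq compose_inv_into_id)
  moreover have "cmp ?U f ?g = idn ?U (gcod ?U f)"
    using f unfolding fe by (simp add: restrict_id_eq compose_id_inv_into bij_betw_def)
  ultimately show "\<exists>g\<in>Ar ?U. gdom ?U g = gcod ?U f \<and> gcod ?U g = gdom ?U f \<and>
      cmp ?U g f = idn ?U (gdom ?U f) \<and> cmp ?U f g = idn ?U (gcod ?U f)"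
    by (intro bexI[of _ ?g] conjI) (simp_all add: fe del: UD_arr_iff)
next
  let ?U = "U_Delta \<kappa>"
  fix x assume x: "x \<in> Ob ?U"
  obtain A0 A1 \<phi> where xe: "x = (A0,A1,\<phi>)" by (rule dobj_cases)
  show "idn ?U x \<in> Ar ?U" using UD_arr_idn x unfolding xe by (simp del: UD_arr_iff UD_obj_iff)
  show "gdom ?U (idn ?U x) = x" "gcod ?U (idn ?U x) = x" unfolding xe by simp_all
next
  let ?U = "U_Delta \<kappa>"
  fix f g assume f: "f \<in> Ar ?U" and g: "g \<in> Ar ?U" and fg: "gcod ?U f = gdom ?U g"
  obtain A0 A1 \<phi> B0 B1 \<psi> r0 r1 where fe: "f = ((A0,A1,\<phi>),(B0,B1,\<psi>),r0,r1)" by (rule darr_cases)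
  with fg obtain C0 C1 \<chi> s0 s1 where ge: "g = ((B0,B1,\<psi>),(C0,C1,\<chi>),s0,s1)"
    by (cases g rule: darr_cases) simp
  show "cmp ?U g f \<in> Ar ?U"
    using UD_arr_compose f g unfolding fe ge by (simp del: UD_arr_iff)
  show "gdom ?U (cmp ?U g f) = gdom ?U f" "gcod ?U (cmp ?U g f) = gcod ?U g"
    unfolding fe ge by simp_all
next
  let ?U = "U_Delta \<kappa>"
  fix f g h assume f: "f \<in> Ar ?U" and "g \<in> Ar ?U" "h \<in> Ar ?U"
    and fg: "gcod ?U f = gdom ?U g" and gh: "gcod ?U g = gdom ?U h"
  obtain A0 A1 \<phi> B0 B1 \<psi> r0 r1 where fe: "f = ((A0,A1,\<phi>),(B0,B1,\<psi>),r0,r1)" by (rule darr_cases)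
  with fg obtain C0 C1 \<chi> s0 s1 where ge: "g = ((B0,B1,\<psi>),(C0,C1,\<chi>),s0,s1)"
    by (cases g rule: darr_cases) simp
  with gh obtain D t0 t1 where he: "h = ((C0,C1,\<chi>),D,t0,t1)"
    by (cases h rule: darr_cases) simp
  show "cmp ?U h (cmp ?U g f) = cmp ?U (cmp ?U h g) f"
    using f unfolding fe ge he by (simp add: compose_assoc bij_betw_imp_funcset)
qed

lemma igroupoid_U_Delta: "igroupoid (U_Delta \<kappa>)"
  unfolding igroupoid_def functor_betw_def
proof (intro conjI ballI impI groupoid_U_Delta)
  let ?U = "U_Delta \<kappa>"
  show "iob ?U \<in> Ob ?U \<rightarrow> Ob ?U"
    using UD_obj_dinv by (auto simp del: UD_obj_iff dinv_simp elim!: dobj_cases)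
  show "iar ?U \<in> Ar ?U \<rightarrow> Ar ?U"
    using UD_arr_swap by (auto simp del: UD_arr_iff dinv_simp elim!: darr_cases)
  fix f assume f: "f \<in> Ar ?U"
  obtain A0 A1 \<phi> B0 B1 \<psi> r0 r1 where fe: "f = ((A0,A1,\<phi>),(B0,B1,\<psi>),r0,r1)" by (rule darr_cases)
  show "gdom ?U (iar ?U f) = iob ?U (gdom ?U f)" "gcod ?U (iar ?U f) = iob ?U (gcod ?U f)"
    unfolding fe by (simp_all del: dinv_simp)
  show "iar ?U (iar ?U f) = f"
    using f dinv_dinv[of A0 A1 \<phi> \<kappa>] dinv_dinv[of B0 B1 \<psi> \<kappa>] unfolding fe
    by (simp del: dinv_simp UD_obj_iff)
  fix g assume "g \<in> Ar ?U" and fg: "gcod ?U f = gdom ?U g"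
  with fe obtain C s0 s1 where "g = ((B0,B1,\<psi>),C,s0,s1)" by (cases g rule: darr_cases) simp
  with fe show "iar ?U (cmp ?U g f) = cmp ?U (iar ?U g) (iar ?U f)" by simp
next
  let ?U = "U_Delta \<kappa>"
  fix x assume x: "x \<in> Ob ?U"
  obtain A0 A1 \<phi> where xe: "x = (A0,A1,\<phi>)" by (rule dobj_cases)
  show "iar ?U (idn ?U x) = idn ?U (iob ?U x)" unfolding xe by simp
  show "iob ?U (iob ?U x) = x" using dinv_dinv x unfolding xe by (simp del: dinv_simp UD_obj_iff)
qed

lemma ginv_U_Delta:
  assumes f: "((A0,A1,\<phi>),(B0,B1,\<psi>),r0,r1) \<in> UD_arr \<kappa>"
  shows "ginv (U_Delta \<kappa>) ((A0,A1,\<phi>),(B0,B1,\<psi>),r0,r1) =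
    ((B0,B1,\<psi>),(A0,A1,\<phi>),restrict (inv_into A0 r0) B0, restrict (inv_into A1 r1) B1)"
proof -
  have "bij_betw r0 A0 B0" "bij_betw r1 A1 B1" using f by simp_all
  then show ?thesis
    using f UD_arr_inverse[OF f]
    by (intro ginv_unique[OF groupoid_U_Delta])
      (simp_all del: UD_arr_iff UD_obj_iff add: restrict_id_eq compose_inv_into_id)
qed

definition UD_replace_ob :: "'u dobj \<Rightarrow> 'u dobj \<Rightarrow> 'u darr \<Rightarrow> 'u dobj" where
  "UD_replace_ob x x' \<beta> = (case (x, x', \<beta>) of ((A0,A1,\<phi>),(B0,B1,\<psi>),(X,Y,r0,r1)) \<Rightarrow>
     (A0, B0, restrict (r0 \<circ> \<phi>) A0))"

definition UD_replace_ar :: "'u dobj \<Rightarrow> 'u dobj \<Rightarrow> 'u darr \<Rightarrow> 'u darr" where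
  "UD_replace_ar x x' \<beta> = (case (x, x', \<beta>) of ((A0,A1,\<phi>),(B0,B1,\<psi>),(X,Y,r0,r1)) \<Rightarrow>
     ((A0, B0, restrict (r0 \<circ> \<phi>) A0), (A0,A1,\<phi>), restrict id A0, restrict (inv_into A1 r0) B0))"

lemma UD_replace_ob_simp[simp]:
  "UD_replace_ob (A0,A1,\<phi>) (B0,B1,\<psi>) (X,Y,r0,r1) = (A0, B0, restrict (r0 \<circ> \<phi>) A0)"
  by (simp add: UD_replace_ob_def)

lemma UD_replace_ar_simp[simp]:
  "UD_replace_ar (A0,A1,\<phi>) (B0,B1,\<psi>) (X,Y,r0,r1) =
    ((A0, B0, restrict (r0 \<circ> \<phi>) A0), (A0,A1,\<phi>), restrict id A0, restrict (inv_into A1 r0) B0)"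
  by (simp add: UD_replace_ar_def)

locale UD_replacement_datum =
  fixes \<kappa> :: "'k rel" and A0 A1 B0 B1 :: "'u set" and \<phi> \<psi> r0 r1 :: "'u \<Rightarrow> 'u" and \<beta> :: "'u darr"
  assumes x: "(A0,A1,\<phi>) \<in> UD_obj \<kappa>" and x': "(B0,B1,\<psi>) \<in> UD_obj \<kappa>"
    and \<beta>_eq: "\<beta> = ((A1,A0,restrict (inv_into A0 \<phi>) A1),(B0,B1,\<psi>),r0,r1)"
    and \<beta>_arr: "\<beta> \<in> UD_arr \<kappa>"
begin

lemma \<beta>_UD_arr: "((A1,A0,restrict (inv_into A0 \<phi>) A1),(B0,B1,\<psi>),r0,r1) \<in> UD_arr \<kappa>"
  using \<beta>_arr unfolding \<beta>_eq .

lemma bij_data: "bij_betw \<phi> A0 A1" "bij_betw \<psi> B0 B1" "bij_betw r0 A1 B0" "bij_betw r1 A0 B1"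
  and extensional_data: "\<phi> \<in> extensional A0" "r1 \<in> extensional A0"
  using x x' \<beta>_UD_arr by auto

lemma UD_replace_in:
  "UD_replace_ob (A0,A1,\<phi>) (B0,B1,\<psi>) \<beta> \<in> UD_obj \<kappa> \<and>
    UD_replace_ar (A0,A1,\<phi>) (B0,B1,\<psi>) \<beta> \<in> UD_arr \<kappa>"
proof -
  have bj: "bij_betw (r0 \<circ> \<phi>) A0 B0" using bij_betw_trans bij_data by blast
  have "\<forall>a\<in>A0. \<phi> a = inv_into A1 r0 (r0 (\<phi> a))"
    using inv_into_f_f[OF bij_betw_imp_inj_on[OF bij_data(3)]] bij_betw_apply[OF bij_data(1)] by auto
  moreover have "\<forall>a\<in>A0. r0 (\<phi> a) \<in> B0" using bj bij_betw_apply by fastforce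
  ultimately show ?thesis
    using x x' \<beta>_UD_arr bj unfolding \<beta>_eq by (auto simp: restrict_id_eq bij_betw_id[unfolded id_def] bij_betw_inv_into)
qed

lemma inv_into_replace:
  assumes y: "y \<in> B0"
  shows "inv_into A0 r1 (\<psi> y) = inv_into A0 (restrict (r0 \<circ> \<phi>) A0) y"
proof -
  define a where "a = inv_into A0 r1 (\<psi> y)"
  have a: "a \<in> A0" "r1 a = \<psi> y"
    unfolding a_def using bij_betw_apply[OF bij_data(2) y] bij_data(4)
    by (auto simp: bij_betw_def inv_into_into f_inv_into_f)
  have \<phi>a: "\<phi> a \<in> A1" using bij_betw_apply[OF bij_data(1) a(1)] .
  have "\<psi> (r0 (\<phi> a)) = r1 (inv_into A0 \<phi> (\<phi> a))" using \<beta>_UD_arr \<phi>a by auto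
  also have "\<dots> = \<psi> y" using inv_into_f_f[OF bij_betw_imp_inj_on[OF bij_data(1)] a(1)] a by simp
  finally have "r0 (\<phi> a) = y"
    using bij_betw_imp_inj_on[OF bij_data(2)] bij_betw_apply[OF bij_data(3) \<phi>a] y by (auto dest: inj_onD)
  then show ?thesis
    unfolding a_def[symmetric]
    using a(1) bij_betw_imp_inj_on[OF bij_betw_trans[OF bij_data(1) bij_data(3)]]
    by (intro inv_into_f_eq[symmetric]) (auto simp: inj_on_def)
qed

lemma restrict_inv_into_replace:
  "restrict (restrict (inv_into A0 r1) B1 \<circ> \<psi>) B0 = restrict (inv_into A0 (restrict (r0 \<circ> \<phi>) A0)) B0"
  by (rule restrict_ext) (use inv_into_replace bij_betw_apply[OF bij_data(2)] in auto)

lemma restrict_inv_into_inv_into: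
  "restrict (inv_into B1 (restrict (inv_into A0 r1) B1)) A0 = compose A0 r1 (restrict id A0)"
  unfolding restrict_id_eq compose_restrict_ident extensional_restrict[OF extensional_data(2)]
proof (rule extensionalityI[OF _ extensional_data(2)])
  fix a assume a: "a \<in> A0"
  have "inj_on (restrict (inv_into A0 r1) B1) B1"
    using bij_betw_imp_inj_on[OF bij_betw_inv_into[OF bij_data(4)]] by simp
  then have "inv_into B1 (restrict (inv_into A0 r1) B1) a = r1 a"
    using bij_betw_apply[OF bij_data(4) a] inv_into_f_f[OF bij_betw_imp_inj_on[OF bij_data(4)] a]
    by (intro inv_into_f_eq) auto
  then show "restrict (inv_into B1 (restrict (inv_into A0 r1) B1)) A0 a = r1 a" using a by simp
qed simp

lemma UD_replace_conjugate:
  "UD_replace_ob (B0,B1,\<psi>) (A0,A1,\<phi>) (ginv (U_Delta \<kappa>) (iar (U_Delta \<kappa>) \<beta>)) =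
      iob (U_Delta \<kappa>) (UD_replace_ob (A0,A1,\<phi>) (B0,B1,\<psi>) \<beta>) \<and>
    UD_replace_ar (B0,B1,\<psi>) (A0,A1,\<phi>) (ginv (U_Delta \<kappa>) (iar (U_Delta \<kappa>) \<beta>)) =
      cmp (U_Delta \<kappa>) \<beta> (iar (U_Delta \<kappa>) (UD_replace_ar (A0,A1,\<phi>) (B0,B1,\<psi>) \<beta>))"
proof -
  have dd: "dinv (A1,A0,restrict (inv_into A0 \<phi>) A1) = (A0,A1,\<phi>)" using dinv_dinv[OF x] by simp
  have iar_\<beta>: "iar (U_Delta \<kappa>) \<beta> = ((A0,A1,\<phi>),(B1,B0,restrict (inv_into B0 \<psi>) B1),r1,r0)"
    unfolding \<beta>_eq using dd by (simp del: dinv_simp) simp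
  have "((A0,A1,\<phi>),(B1,B0,restrict (inv_into B0 \<psi>) B1),r1,r0) \<in> UD_arr \<kappa>"
    using UD_arr_swap[OF \<beta>_UD_arr] dd by (simp del: dinv_simp UD_arr_iff) (simp del: UD_arr_iff)
  then have "ginv (U_Delta \<kappa>) (iar (U_Delta \<kappa>) \<beta>) =
      ((B1,B0,restrict (inv_into B0 \<psi>) B1),(A0,A1,\<phi>),restrict (inv_into A0 r1) B1,
        restrict (inv_into A1 r0) B0)"
    unfolding iar_\<beta> by (rule ginv_U_Delta)
  moreover have "compose B0 r0 (restrict (inv_into A1 r0) B0) = restrict id B0"
    using compose_id_inv_into[of r0 A1 B0] bij_data(3) by (simp add: restrict_id_eq bij_betw_def)
  ultimately show ?thesis
    using restrict_inv_into_replace restrict_inv_into_inv_into unfolding \<beta>_eq by (simp add: restrict_id_eq)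
qed

end

lemma UD_replace_idn:
  assumes x: "(A0,A1,\<phi>) \<in> UD_obj \<kappa>"
  shows "UD_replace_ob (A0,A1,\<phi>) (dinv (A0,A1,\<phi>)) (idn (U_Delta \<kappa>) (dinv (A0,A1,\<phi>))) = (A0,A1,\<phi>) \<and>
    UD_replace_ar (A0,A1,\<phi>) (dinv (A0,A1,\<phi>)) (idn (U_Delta \<kappa>) (dinv (A0,A1,\<phi>))) =
      idn (U_Delta \<kappa>) (A0,A1,\<phi>)"
proof -
  have \<phi>: "bij_betw \<phi> A0 A1" "\<phi> \<in> extensional A0" using x by auto
  have "restrict (restrict id A1 \<circ> \<phi>) A0 = \<phi>"
    by (rule extensionalityI[OF _ \<phi>(2)]) (use bij_betw_apply[OF \<phi>(1)] in auto)
  moreover have "restrict (inv_into A1 (restrict id A1)) A1 = restrict id A1"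
    by (rule restrict_ext) (auto intro!: inv_into_f_eq simp: inj_on_def)
  ultimately show ?thesis by simp
qed

lemma involutive_replacement_U_Delta:
  "involutive_replacement (U_Delta \<kappa>) UD_replace_ob UD_replace_ar"
  unfolding involutive_replacement_def
proof (intro conjI ballI)
  let ?U = "U_Delta \<kappa>"
  fix x x' \<beta> assume x: "x \<in> Ob ?U" and x': "x' \<in> Ob ?U" and b: "\<beta> \<in> hom ?U (iob ?U x) x'"
  obtain A0 A1 \<phi> where xe: "x = (A0,A1,\<phi>)" by (rule dobj_cases)
  obtain B0 B1 \<psi> where xe': "x' = (B0,B1,\<psi>)" by (rule dobj_cases)
  from b obtain r0 r1 where be: "\<beta> = ((A1,A0,restrict (inv_into A0 \<phi>) A1),(B0,B1,\<psi>),r0,r1)"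
    unfolding xe xe' hom_def by (cases \<beta> rule: darr_cases) auto
  have data: "(A0,A1,\<phi>) \<in> UD_obj \<kappa>" "(B0,B1,\<psi>) \<in> UD_obj \<kappa>" "\<beta> \<in> UD_arr \<kappa>"
    using x x' b unfolding xe xe' hom_def by (simp_all del: UD_obj_iff UD_arr_iff)
  interpret UD_replacement_datum \<kappa> A0 A1 B0 B1 \<phi> \<psi> r0 r1 \<beta>
    using data(1,2) be data(3) by (rule UD_replacement_datum.intro)
  have "UD_replace_ob x x' \<beta> \<in> Ob ?U \<and> UD_replace_ar x x' \<beta> \<in> hom ?U (UD_replace_ob x x' \<beta>) x"
    using UD_replace_in unfolding xe xe' be hom_def
    by (simp del: UD_arr_iff UD_obj_iff UD_replace_ob_simp UD_replace_ar_simp) simp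
  moreover note UD_replace_conjugate[folded xe xe']
  ultimately show "UD_replace_ob x x' \<beta> \<in> Ob ?U" "UD_replace_ar x x' \<beta> \<in> hom ?U (UD_replace_ob x x' \<beta>) x"
    "UD_replace_ob x' x (ginv ?U (iar ?U \<beta>)) = iob ?U (UD_replace_ob x x' \<beta>)"
    "UD_replace_ar x' x (ginv ?U (iar ?U \<beta>)) = cmp ?U \<beta> (iar ?U (UD_replace_ar x x' \<beta>))"
    by blast+
next
  let ?U = "U_Delta \<kappa>"
  fix x assume x: "x \<in> Ob ?U"
  obtain A0 A1 \<phi> where xe: "x = (A0,A1,\<phi>)" by (rule dobj_cases)
  show "UD_replace_ob x (iob ?U x) (idn ?U (iob ?U x)) = x"
    "UD_replace_ar x (iob ?U x) (idn ?U (iob ?U x)) = idn ?U x"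
    using UD_replace_idn[of A0 A1 \<phi> \<kappa>] x unfolding xe
    by (simp_all del: UD_obj_iff UD_replace_ob_simp UD_replace_ar_simp dinv_simp)
qed

section \<open>The pointed universe \<open>U\<^sub>\<Delta>\<^sup>~\<close>\<close>

lemma pobj_cases:
  fixes x :: "'u pobj"
  obtains A0 A1 a \<phi> where "x = (A0,A1,a,\<phi>)"
  by (cases x) auto

lemma parr_cases:
  fixes f :: "'u parr"
  obtains A0 A1 a \<phi> B0 B1 b \<psi> r0 r1 where "f = ((A0,A1,a,\<phi>),(B0,B1,b,\<psi>),r0,r1)"
  by (cases f) auto

lemma UtD_obj_iff[simp]: "(A0,A1,a,\<phi>) \<in> UtD_obj \<kappa> \<longleftrightarrow> (A0,A1,\<phi>) \<in> UD_obj \<kappa> \<and> a \<in> A0"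
  by (simp add: UtD_obj_def del: UD_obj_iff)

lemma UtD_arr_iff[simp]:
  "((A0,A1,a,\<phi>),(B0,B1,b,\<psi>),r0,r1) \<in> UtD_arr \<kappa> \<longleftrightarrow>
    (A0,A1,a,\<phi>) \<in> UtD_obj \<kappa> \<and> (B0,B1,b,\<psi>) \<in> UtD_obj \<kappa> \<and>
    ((A0,A1,\<phi>),(B0,B1,\<psi>),r0,r1) \<in> UD_arr \<kappa> \<and> r0 a = b"
  by (simp add: UtD_arr_def del: UD_obj_iff UD_arr_iff UtD_obj_iff)

lemma pinv_simp[simp]: "pinv (A0,A1,a,\<phi>) = (A1,A0,\<phi> a,restrict (inv_into A0 \<phi>) A1)"
  by (simp add: pinv_def)

lemma Ut_Delta_simps[simp]:
  "Ob (Ut_Delta \<kappa>) = UtD_obj \<kappa>" "Ar (Ut_Delta \<kappa>) = UtD_arr \<kappa>"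
  "gdom (Ut_Delta \<kappa>) (X,Y,r0,r1) = X" "gcod (Ut_Delta \<kappa>) (X,Y,r0,r1) = Y"
  "idn (Ut_Delta \<kappa>) (A0,A1,a,\<phi>) = ((A0,A1,a,\<phi>),(A0,A1,a,\<phi>),restrict id A0, restrict id A1)"
  "cmp (Ut_Delta \<kappa>) (Y,Z,s0,s1) ((A0,A1,a,\<phi>),Y',r0,r1) =
    ((A0,A1,a,\<phi>),Z,compose A0 s0 r0, compose A1 s1 r1)"
  "iob (Ut_Delta \<kappa>) = pinv" "iar (Ut_Delta \<kappa>) (X,Y,r0,r1) = (pinv X, pinv Y, r1, r0)"
  by (simp_all add: Ut_Delta_def)

lemma UtD_arr_idn:
  "(A0,A1,a,\<phi>) \<in> UtD_obj \<kappa> \<Longrightarrow> ((A0,A1,a,\<phi>),(A0,A1,a,\<phi>),restrict id A0, restrict id A1) \<in> UtD_arr \<kappa>"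
  using UD_arr_idn[of A0 A1 \<phi> \<kappa>] by (simp del: UD_obj_iff UD_arr_iff)

lemma UtD_arr_compose:
  "((A0,A1,a,\<phi>),(B0,B1,b,\<psi>),r0,r1) \<in> UtD_arr \<kappa> \<Longrightarrow> ((B0,B1,b,\<psi>),(C0,C1,c,\<chi>),s0,s1) \<in> UtD_arr \<kappa> \<Longrightarrow>
    ((A0,A1,a,\<phi>),(C0,C1,c,\<chi>),compose A0 s0 r0, compose A1 s1 r1) \<in> UtD_arr \<kappa>"
  using UD_arr_compose[of A0 A1 \<phi> B0 B1 \<psi> r0 r1 \<kappa> C0 C1 \<chi> s0 s1]
  by (simp del: UD_obj_iff UD_arr_iff add: compose_eq)

lemma UtD_arr_inverse:
  assumes f: "((A0,A1,a,\<phi>),(B0,B1,b,\<psi>),r0,r1) \<in> UtD_arr \<kappa>"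
  shows "((B0,B1,b,\<psi>),(A0,A1,a,\<phi>),restrict (inv_into A0 r0) B0, restrict (inv_into A1 r1) B1) \<in> UtD_arr \<kappa>"
proof -
  have u: "((A0,A1,\<phi>),(B0,B1,\<psi>),r0,r1) \<in> UD_arr \<kappa>" and "a \<in> A0" "r0 a = b" using f by simp_all
  then have "restrict (inv_into A0 r0) B0 b = a"
    using inv_into_f_f[OF bij_betw_imp_inj_on] bij_betw_apply by fastforce
  then show ?thesis using f UD_arr_inverse[OF u] by (simp del: UD_obj_iff UD_arr_iff)
qed

lemma UtD_obj_pinv: "(A0,A1,a,\<phi>) \<in> UtD_obj \<kappa> \<Longrightarrow> pinv (A0,A1,a,\<phi>) \<in> UtD_obj \<kappa>"
  using UD_obj_dinv[of A0 A1 \<phi> \<kappa>] by (auto simp del: UD_obj_iff dinv_simp) (auto simp: bij_betw_apply)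

lemma pinv_pinv:
  assumes x: "(A0,A1,a,\<phi>) \<in> UtD_obj \<kappa>"
  shows "pinv (pinv (A0,A1,a,\<phi>)) = (A0,A1,a,\<phi>)"
proof -
  have u: "(A0,A1,\<phi>) \<in> UD_obj \<kappa>" "a \<in> A0" using x by simp_all
  then have "restrict (inv_into A0 \<phi>) A1 (\<phi> a) = a"
    using inv_into_f_f[OF bij_betw_imp_inj_on] bij_betw_apply by fastforce
  then show ?thesis using dinv_dinv[OF u(1)] by simp
qed

lemma UtD_arr_swap:
  assumes f: "((A0,A1,a,\<phi>),(B0,B1,b,\<psi>),r0,r1) \<in> UtD_arr \<kappa>"
  shows "(pinv (A0,A1,a,\<phi>), pinv (B0,B1,b,\<psi>), r1, r0) \<in> UtD_arr \<kappa>"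
proof -
  have u: "((A0,A1,\<phi>),(B0,B1,\<psi>),r0,r1) \<in> UD_arr \<kappa>" and "a \<in> A0" "r0 a = b" using f by simp_all
  then have "r1 (\<phi> a) = \<psi> b" by auto
  moreover have "(A0,A1,a,\<phi>) \<in> UtD_obj \<kappa>" "(B0,B1,b,\<psi>) \<in> UtD_obj \<kappa>"
    using f by (simp_all del: UtD_obj_iff UD_arr_iff)
  ultimately show ?thesis
    using UD_arr_swap[OF u] UtD_obj_pinv[of A0 A1 a \<phi> \<kappa>] UtD_obj_pinv[of B0 B1 b \<psi> \<kappa>]
    by (simp del: UD_obj_iff UD_arr_iff UtD_obj_iff)
qed

lemma groupoid_Ut_Delta: "groupoid (Ut_Delta \<kappa>)"
  unfolding groupoid_def
proof (intro conjI ballI impI)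
  let ?U = "Ut_Delta \<kappa>"
  fix f assume f: "f \<in> Ar ?U"
  obtain A0 A1 a \<phi> B0 B1 b \<psi> r0 r1 where fe: "f = ((A0,A1,a,\<phi>),(B0,B1,b,\<psi>),r0,r1)"
    by (rule parr_cases)
  show "gdom ?U f \<in> Ob ?U" "gcod ?U f \<in> Ob ?U"
    using f unfolding fe by (simp_all del: UtD_obj_iff)
  show "cmp ?U (idn ?U (gcod ?U f)) f = f"
    using f unfolding fe by (simp add: restrict_id_eq Id_compose bij_betw_imp_funcset)
  show "cmp ?U f (idn ?U (gdom ?U f)) = f"
    using f unfolding fe by (simp add: restrict_id_eq compose_restrict_ident extensional_restrict)
  let ?g = "((B0,B1,b,\<psi>),(A0,A1,a,\<phi>),restrict (inv_into A0 r0) B0, restrict (inv_into A1 r1) B1)"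
  have "?g \<in> Ar ?U" using UtD_arr_inverse f unfolding fe by (simp del: UtD_arr_iff)
  moreover have "cmp ?U ?g f = idn ?U (gdom ?U f)"
    using f unfolding fe by (simp add: restrict_id_eq compose_inv_into_id)
  moreover have "cmp ?U f ?g = idn ?U (gcod ?U f)"
    using f unfolding fe by (simp add: restrict_id_eq compose_id_inv_into bij_betw_def)
  ultimately show "\<exists>g\<in>Ar ?U. gdom ?U g = gcod ?U f \<and> gcod ?U g = gdom ?U f \<and>
      cmp ?U g f = idn ?U (gdom ?U f) \<and> cmp ?U f g = idn ?U (gcod ?U f)"
    by (intro bexI[of _ ?g] conjI) (simp_all add: fe del: UtD_arr_iff)
next
  let ?U = "Ut_Delta \<kappa>"
  fix x assume x: "x \<in> Ob ?U"
  obtain A0 A1 a \<phi> where xe: "x = (A0,A1,a,\<phi>)" by (rule pobj_cases)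
  show "idn ?U x \<in> Ar ?U" using UtD_arr_idn x unfolding xe by (simp del: UtD_arr_iff UtD_obj_iff)
  show "gdom ?U (idn ?U x) = x" "gcod ?U (idn ?U x) = x" unfolding xe by simp_all
next
  let ?U = "Ut_Delta \<kappa>"
  fix f g assume f: "f \<in> Ar ?U" and g: "g \<in> Ar ?U" and fg: "gcod ?U f = gdom ?U g"
  obtain A0 A1 a \<phi> B0 B1 b \<psi> r0 r1 where fe: "f = ((A0,A1,a,\<phi>),(B0,B1,b,\<psi>),r0,r1)"
    by (rule parr_cases)
  with fg obtain C0 C1 c \<chi> s0 s1 where ge: "g = ((B0,B1,b,\<psi>),(C0,C1,c,\<chi>),s0,s1)"
    by (cases g rule: parr_cases) simp
  show "cmp ?U g f \<in> Ar ?U"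
    using UtD_arr_compose f g unfolding fe ge by (simp del: UtD_arr_iff)
  show "gdom ?U (cmp ?U g f) = gdom ?U f" "gcod ?U (cmp ?U g f) = gcod ?U g"
    unfolding fe ge by simp_all
next
  let ?U = "Ut_Delta \<kappa>"
  fix f g h assume f: "f \<in> Ar ?U" and "g \<in> Ar ?U" "h \<in> Ar ?U"
    and fg: "gcod ?U f = gdom ?U g" and gh: "gcod ?U g = gdom ?U h"
  obtain A0 A1 a \<phi> B0 B1 b \<psi> r0 r1 where fe: "f = ((A0,A1,a,\<phi>),(B0,B1,b,\<psi>),r0,r1)"
    by (rule parr_cases)
  with fg obtain C0 C1 c \<chi> s0 s1 where ge: "g = ((B0,B1,b,\<psi>),(C0,C1,c,\<chi>),s0,s1)"
    by (cases g rule: parr_cases) simp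
  with gh obtain D t0 t1 where he: "h = ((C0,C1,c,\<chi>),D,t0,t1)"
    by (cases h rule: parr_cases) simp
  show "cmp ?U h (cmp ?U g f) = cmp ?U (cmp ?U h g) f"
    using f unfolding fe ge he by (simp add: compose_assoc bij_betw_imp_funcset)
qed

lemma igroupoid_Ut_Delta: "igroupoid (Ut_Delta \<kappa>)"
  unfolding igroupoid_def functor_betw_def
proof (intro conjI ballI impI groupoid_Ut_Delta)
  let ?U = "Ut_Delta \<kappa>"
  show "iob ?U \<in> Ob ?U \<rightarrow> Ob ?U"
    using UtD_obj_pinv by (auto simp del: UtD_obj_iff pinv_simp elim!: pobj_cases)
  show "iar ?U \<in> Ar ?U \<rightarrow> Ar ?U"
    using UtD_arr_swap by (auto simp del: UtD_arr_iff pinv_simp elim!: parr_cases)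
  fix f assume f: "f \<in> Ar ?U"
  obtain A0 A1 a \<phi> B0 B1 b \<psi> r0 r1 where fe: "f = ((A0,A1,a,\<phi>),(B0,B1,b,\<psi>),r0,r1)"
    by (rule parr_cases)
  show "gdom ?U (iar ?U f) = iob ?U (gdom ?U f)" "gcod ?U (iar ?U f) = iob ?U (gcod ?U f)"
    unfolding fe by (simp_all del: pinv_simp)
  show "iar ?U (iar ?U f) = f"
    using f pinv_pinv[of A0 A1 a \<phi> \<kappa>] pinv_pinv[of B0 B1 b \<psi> \<kappa>] unfolding fe
    by (simp del: pinv_simp UtD_obj_iff)
  fix g assume "g \<in> Ar ?U" and fg: "gcod ?U f = gdom ?U g"
  with fe obtain C s0 s1 where "g = ((B0,B1,b,\<psi>),C,s0,s1)" by (cases g rule: parr_cases) simp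
  moreover have "\<phi> a \<in> A1" using f unfolding fe by (auto simp: bij_betw_apply)
  ultimately show "iar ?U (cmp ?U g f) = cmp ?U (iar ?U g) (iar ?U f)" using fe by simp
next
  let ?U = "Ut_Delta \<kappa>"
  fix x assume x: "x \<in> Ob ?U"
  obtain A0 A1 a \<phi> where xe: "x = (A0,A1,a,\<phi>)" by (rule pobj_cases)
  show "iar ?U (idn ?U x) = idn ?U (iob ?U x)" using x unfolding xe by simp
  show "iob ?U (iob ?U x) = x" using pinv_pinv x unfolding xe by (simp del: pinv_simp UtD_obj_iff)
qed

lemma ginv_Ut_Delta:
  assumes f: "((A0,A1,a,\<phi>),(B0,B1,b,\<psi>),r0,r1) \<in> UtD_arr \<kappa>"
  shows "ginv (Ut_Delta \<kappa>) ((A0,A1,a,\<phi>),(B0,B1,b,\<psi>),r0,r1) =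
    ((B0,B1,b,\<psi>),(A0,A1,a,\<phi>),restrict (inv_into A0 r0) B0, restrict (inv_into A1 r1) B1)"
proof -
  have "bij_betw r0 A0 B0" "bij_betw r1 A1 B1" using f by simp_all
  then show ?thesis
    using f UtD_arr_inverse[OF f]
    by (intro ginv_unique[OF groupoid_Ut_Delta])
      (simp_all del: UtD_arr_iff UtD_obj_iff add: restrict_id_eq compose_inv_into_id)
qed

definition UtD_replace_ob :: "'u pobj \<Rightarrow> 'u pobj \<Rightarrow> 'u parr \<Rightarrow> 'u pobj" where
  "UtD_replace_ob x x' \<beta> = (case (x, x', \<beta>) of ((A0,A1,a,\<phi>),(B0,B1,b,\<psi>),(X,Y,r0,r1)) \<Rightarrow>
     (A0, B0, a, restrict (r0 \<circ> \<phi>) A0))"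

definition UtD_replace_ar :: "'u pobj \<Rightarrow> 'u pobj \<Rightarrow> 'u parr \<Rightarrow> 'u parr" where
  "UtD_replace_ar x x' \<beta> = (case (x, x', \<beta>) of ((A0,A1,a,\<phi>),(B0,B1,b,\<psi>),(X,Y,r0,r1)) \<Rightarrow>
     ((A0, B0, a, restrict (r0 \<circ> \<phi>) A0), (A0,A1,a,\<phi>), restrict id A0, restrict (inv_into A1 r0) B0))"

lemma UtD_replace_ob_simp[simp]:
  "UtD_replace_ob (A0,A1,a,\<phi>) (B0,B1,b,\<psi>) (X,Y,r0,r1) = (A0, B0, a, restrict (r0 \<circ> \<phi>) A0)"
  by (simp add: UtD_replace_ob_def)

lemma UtD_replace_ar_simp[simp]:
  "UtD_replace_ar (A0,A1,a,\<phi>) (B0,B1,b,\<psi>) (X,Y,r0,r1) =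
    ((A0, B0, a, restrict (r0 \<circ> \<phi>) A0), (A0,A1,a,\<phi>), restrict id A0, restrict (inv_into A1 r0) B0)"
  by (simp add: UtD_replace_ar_def)

locale UtD_replacement_datum =
  fixes \<kappa> :: "'k rel" and A0 A1 B0 B1 :: "'u set" and a b :: 'u and \<phi> \<psi> r0 r1 :: "'u \<Rightarrow> 'u"
    and \<beta> :: "'u parr"
  assumes x: "(A0,A1,a,\<phi>) \<in> UtD_obj \<kappa>" and x': "(B0,B1,b,\<psi>) \<in> UtD_obj \<kappa>"
    and \<beta>_eq: "\<beta> = ((A1,A0,\<phi> a,restrict (inv_into A0 \<phi>) A1),(B0,B1,b,\<psi>),r0,r1)"
    and \<beta>_arr: "\<beta> \<in> UtD_arr \<kappa>"
begin

sublocale underlying: UD_replacement_datum \<kappa> A0 A1 B0 B1 \<phi> \<psi> r0 r1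
  "((A1,A0,restrict (inv_into A0 \<phi>) A1),(B0,B1,\<psi>),r0,r1)"
  using x x' \<beta>_arr unfolding \<beta>_eq by unfold_locales (simp_all del: UD_obj_iff UD_arr_iff)

lemma point: "a \<in> A0" "r0 (\<phi> a) = b"
  using x \<beta>_arr unfolding \<beta>_eq by simp_all

lemma UtD_replace_in:
  "UtD_replace_ob (A0,A1,a,\<phi>) (B0,B1,b,\<psi>) \<beta> \<in> UtD_obj \<kappa> \<and>
    UtD_replace_ar (A0,A1,a,\<phi>) (B0,B1,b,\<psi>) \<beta> \<in> UtD_arr \<kappa>"
  using underlying.UD_replace_in point x unfolding \<beta>_eq by (simp del: UD_obj_iff UD_arr_iff)

lemma UtD_replace_conjugate:
  "UtD_replace_ob (B0,B1,b,\<psi>) (A0,A1,a,\<phi>) (ginv (Ut_Delta \<kappa>) (iar (Ut_Delta \<kappa>) \<beta>)) =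
      iob (Ut_Delta \<kappa>) (UtD_replace_ob (A0,A1,a,\<phi>) (B0,B1,b,\<psi>) \<beta>) \<and>
    UtD_replace_ar (B0,B1,b,\<psi>) (A0,A1,a,\<phi>) (ginv (Ut_Delta \<kappa>) (iar (Ut_Delta \<kappa>) \<beta>)) =
      cmp (Ut_Delta \<kappa>) \<beta> (iar (Ut_Delta \<kappa>) (UtD_replace_ar (A0,A1,a,\<phi>) (B0,B1,b,\<psi>) \<beta>))"
proof -
  have pp: "pinv (A1,A0,\<phi> a,restrict (inv_into A0 \<phi>) A1) = (A0,A1,a,\<phi>)" using pinv_pinv[OF x] by simp
  have iar_\<beta>: "iar (Ut_Delta \<kappa>) \<beta> = ((A0,A1,a,\<phi>),(B1,B0,\<psi> b,restrict (inv_into B0 \<psi>) B1),r1,r0)"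
    unfolding \<beta>_eq using pp by (simp del: pinv_simp) simp
  have "((A0,A1,a,\<phi>),(B1,B0,\<psi> b,restrict (inv_into B0 \<psi>) B1),r1,r0) \<in> UtD_arr \<kappa>"
    using UtD_arr_swap[OF \<beta>_arr[unfolded \<beta>_eq]] pp by (simp del: pinv_simp UtD_arr_iff) (simp del: UtD_arr_iff)
  then have "ginv (Ut_Delta \<kappa>) (iar (Ut_Delta \<kappa>) \<beta>) =
      ((B1,B0,\<psi> b,restrict (inv_into B0 \<psi>) B1),(A0,A1,a,\<phi>),restrict (inv_into A0 r1) B1,
        restrict (inv_into A1 r0) B0)"
    unfolding iar_\<beta> by (rule ginv_Ut_Delta)
  moreover have "restrict (r0 \<circ> \<phi>) A0 a = b" using point by simp
  moreover have "compose B0 r0 (restrict (inv_into A1 r0) B0) = restrict id B0"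
    using compose_id_inv_into[of r0 A1 B0] underlying.bij_data by (simp add: restrict_id_eq bij_betw_def)
  ultimately show ?thesis
    using underlying.restrict_inv_into_replace underlying.restrict_inv_into_inv_into
    unfolding \<beta>_eq by (simp add: restrict_id_eq del: UD_obj_iff UD_arr_iff)
qed

end

lemma UtD_replace_idn:
  assumes "(A0,A1,a,\<phi>) \<in> UtD_obj \<kappa>"
  shows "UtD_replace_ob (A0,A1,a,\<phi>) (pinv (A0,A1,a,\<phi>)) (idn (Ut_Delta \<kappa>) (pinv (A0,A1,a,\<phi>))) =
      (A0,A1,a,\<phi>) \<and>
    UtD_replace_ar (A0,A1,a,\<phi>) (pinv (A0,A1,a,\<phi>)) (idn (Ut_Delta \<kappa>) (pinv (A0,A1,a,\<phi>))) =
      idn (Ut_Delta \<kappa>) (A0,A1,a,\<phi>)"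
  using assms UD_replace_idn[of A0 A1 \<phi> \<kappa>] by (simp del: UD_obj_iff)

lemma involutive_replacement_Ut_Delta:
  "involutive_replacement (Ut_Delta \<kappa>) UtD_replace_ob UtD_replace_ar"
  unfolding involutive_replacement_def
proof (intro conjI ballI)
  let ?U = "Ut_Delta \<kappa>"
  fix x x' \<beta> assume x: "x \<in> Ob ?U" and x': "x' \<in> Ob ?U" and b: "\<beta> \<in> hom ?U (iob ?U x) x'"
  obtain A0 A1 a \<phi> where xe: "x = (A0,A1,a,\<phi>)" by (rule pobj_cases)
  obtain B0 B1 b' \<psi> where xe': "x' = (B0,B1,b',\<psi>)" by (rule pobj_cases)
  from b obtain r0 r1 where be: "\<beta> = ((A1,A0,\<phi> a,restrict (inv_into A0 \<phi>) A1),(B0,B1,b',\<psi>),r0,r1)"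
    unfolding xe xe' hom_def by (cases \<beta> rule: parr_cases) auto
  have data: "(A0,A1,a,\<phi>) \<in> UtD_obj \<kappa>" "(B0,B1,b',\<psi>) \<in> UtD_obj \<kappa>" "\<beta> \<in> UtD_arr \<kappa>"
    using x x' b unfolding xe xe' hom_def by (simp_all del: UtD_obj_iff UtD_arr_iff)
  interpret UtD_replacement_datum \<kappa> A0 A1 B0 B1 a b' \<phi> \<psi> r0 r1 \<beta>
    using data(1,2) be data(3) by (rule UtD_replacement_datum.intro)
  have "UtD_replace_ob x x' \<beta> \<in> Ob ?U \<and> UtD_replace_ar x x' \<beta> \<in> hom ?U (UtD_replace_ob x x' \<beta>) x"
    using UtD_replace_in unfolding xe xe' be hom_def
    by (simp del: UtD_arr_iff UtD_obj_iff UtD_replace_ob_simp UtD_replace_ar_simp) simp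
  moreover note UtD_replace_conjugate[folded xe xe']
  ultimately show "UtD_replace_ob x x' \<beta> \<in> Ob ?U"
    "UtD_replace_ar x x' \<beta> \<in> hom ?U (UtD_replace_ob x x' \<beta>) x"
    "UtD_replace_ob x' x (ginv ?U (iar ?U \<beta>)) = iob ?U (UtD_replace_ob x x' \<beta>)"
    "UtD_replace_ar x' x (ginv ?U (iar ?U \<beta>)) = cmp ?U \<beta> (iar ?U (UtD_replace_ar x x' \<beta>))"
    by blast+
next
  let ?U = "Ut_Delta \<kappa>"
  fix x assume x: "x \<in> Ob ?U"
  obtain A0 A1 a \<phi> where xe: "x = (A0,A1,a,\<phi>)" by (rule pobj_cases)
  show "UtD_replace_ob x (iob ?U x) (idn ?U (iob ?U x)) = x"
    "UtD_replace_ar x (iob ?U x) (idn ?U (iob ?U x)) = idn ?U x"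
    using UtD_replace_idn[of A0 A1 a \<phi> \<kappa>] x unfolding xe
    by (simp_all del: UtD_obj_iff UtD_replace_ob_simp UtD_replace_ar_simp pinv_simp)
qed

theorem lemma5p15:
  fixes \<kappa> :: "'k rel"
  assumes "inaccessible \<kappa>"
  shows "igroupoid (Ut_Delta \<kappa> :: ('u pobj, 'u parr) igpd) \<and>
         (\<forall>(A :: ('o1, 'a1) igpd) (B :: ('p1, 'b1) igpd) io ia.
            lifts_against (Ut_Delta \<kappa> :: ('u pobj, 'u parr) igpd) A B io ia) \<and>
         igroupoid (U_Delta \<kappa> :: ('u dobj, 'u darr) igpd) \<and>
         (\<forall>(A :: ('o2, 'a2) igpd) (B :: ('p2, 'b2) igpd) io ia.
            lifts_against (U_Delta \<kappa> :: ('u dobj, 'u darr) igpd) A B io ia)"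
  using igroupoid_Ut_Delta igroupoid_U_Delta
    lifts_against_if_involutive_replacement[OF igroupoid_Ut_Delta involutive_replacement_Ut_Delta]
    lifts_against_if_involutive_replacement[OF igroupoid_U_Delta involutive_replacement_U_Delta]
  by blast

end
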